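(* Consider the two compact finite difference schemes (described in the context) for the two-dimensional two-sided space fractional diffusion problem with $1<\alpha,\beta\le2$. If $(p,q)=(1,0)$, both schemes are unconditionally stable for all $1<\alpha,\beta\le2$; if $(p,q)=(1,-1)$, both schemes are unconditionally stable for all $\frac{1+\sqrt{73}}{6}\le\alpha,\beta\le2$.
   Context: Problem on $\Omega=(a,b)\times(c,d)$, $t\in(0,T]$: $\partial_tu=K_1^+\,{}_aD_x^\alpha u+K_2^+\,{}_xD_b^\alpha u+K_1^-\,{}_cD_y^\beta u+K_2^-\,{}_yD_d^\beta u+f$, $u(\cdot,\cdot,0)=u_0$, $u=\varphi$ on $\partial\Omega$, with constants $K_i^\pm\ge0$, $(K_1^+)^2+(K_2^+)^2\ne0$, $(K_1^-)^2+(K_2^-)^2\ne0$; ${}_aD_x^\alpha,{}_xD_b^\alpha$ (resp. ${}_cD_y^\beta,{}_yD_d^\beta$) are the left and right Riemann–Liouville derivatives in $x$ on $(a,b)$ (resp. in $y$ on $(c,d)$). Grid: common step $h$ with $b-a=N_xh$, $d-c=N_yh$, $\tau=T/M$, $x_i=a+ih$, $y_j=c+jh$, $t_n=n\tau$. For $\gamma\in\{\alpha,\beta\}$ let $g_k^{(\gamma)}=(-1)^k\binom{\gamma}{k}$ and define weights $w_k^{(\gamma)}$: for $(p,q)=(1,0)$, $w_0^{(\gamma)}=\frac{\gamma}{2}g_0^{(\gamma)}$, $w_k^{(\gamma)}=\frac{\gamma}{2}g_k^{(\gamma)}+\frac{2-\gamma}{2}g_{k-1}^{(\gamma)}$ ($k\ge1$);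 for $(p,q)=(1,-1)$, $w_0^{(\gamma)}=\frac{2+\gamma}{4}g_0^{(\gamma)}$, $w_1^{(\gamma)}=\frac{2+\gamma}{4}g_1^{(\gamma)}$, $w_k^{(\gamma)}=\frac{2+\gamma}{4}g_k^{(\gamma)}+\frac{2-\gamma}{4}g_{k-2}^{(\gamma)}$ ($k\ge2$). Let $c^\gamma=\frac{7\gamma-3\gamma^2}{24}$ for $(p,q)=(1,0)$ and $c^\gamma=\frac{\gamma-3\gamma^2+12}{24}$ for $(p,q)=(1,-1)$. Operators on grid functions: $\mathcal{C}_xV_{i,j}=V_{i,j}+c^\alpha(V_{i-1,j}-2V_{i,j}+V_{i+1,j})$, $\mathcal{C}_yV_{i,j}=V_{i,j}+c^\beta(V_{i,j-1}-2V_{i,j}+V_{i,j+1})$, $\delta_x^\alpha V_{i,j}=\frac{K_1^+}{h^\alpha}\sum_{k=0}^{i+1}w_k^{(\alpha)}V_{i-k+1,j}+\frac{K_2^+}{h^\alpha}\sum_{k=0}^{N_x-i+1}w_k^{(\alpha)}V_{i+k-1,j}$, $\delta_y^\beta V_{i,j}=\frac{K_1^-}{h^\beta}\sum_{k=0}^{j+1}w_k^{(\beta)}V_{i,j-k+1}+\frac{K_2^-}{h^\beta}\sum_{k=0}^{N_y-j+1}w_k^{(\beta)}V_{i,j+k-1}$. Scheme I: $(\mathcal{C}_x-\frac{\tau}{2}\delta_x^\alpha)(\mathcal{C}_y-\frac{\tau}{2}\delta_y^\beta)U^{n+1}_{i,j}=(\mathcal{C}_x+\frac{\tau}{2}\delta_x^\alpha)(\mathcal{C}_y+\frac{\tau}{2}\delta_y^\beta)U^n_{i,j}+\tau\mathcal{C}_x\mathcal{C}_yf^{n+1/2}_{i,j}$;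 Scheme II: the same with the additional source term $\frac{\tau^3}{4}\delta_x^\alpha\delta_y^\beta f^{n+1/2}_{i,j}$ on the right; here $1\le i\le N_x-1$, $1\le j\le N_y-1$, $f^{n+1/2}_{i,j}=f(x_i,y_j,t_n+\tau/2)$, with boundary values from $\varphi$. For $m\in\{N_x,N_y\}$ and $\gamma\in\{\alpha,\beta\}$ let $A_\gamma$ be the $(m-1)\times(m-1)$ matrix with entries $w^{(\gamma)}_{i-j+1}$ when $i-j+1\ge0$ and $0$ otherwise, and $C_\gamma=I+c^\gamma\,\mathrm{tridiag}(1,-2,1)$ (with $m=N_x$ for $\alpha$, $m=N_y$ for $\beta$). Ordering the interior unknowns with $i$ running fastest, set $\mathcal{C}_x=I_y\otimes C_\alpha$, $\mathcal{C}_y=C_\beta\otimes I_x$, $\mathcal{D}_x=\frac{\tau}{2h^\alpha}I_y\otimes(K_1^+A_\alpha+K_2^+A_\alpha^T)$, $\mathcal{D}_y=\frac{\tau}{2h^\beta}(K_1^-A_\beta+K_2^-A_\beta^T)\otimes I_x$, where $I_x,I_y$ are identities of orders $N_x-1,N_y-1$. Perturbations of the interior solution propagate (for both schemes) as $\delta U^{n+1}=G\,\delta U^n$ with $G=(\mathcal{C}_y-\mathcal{D}_y)^{-1}(\mathcal{C}_x-\mathcal{D}_x)^{-1}(\mathcal{C}_x+\mathcal{D}_x)(\mathcal{C}_y+\mathcal{D}_y)$. Unconditionally stable means: for all $\tau,h>0$ the inverted matrices exist and $G^n\to0$ as $n\to\infty$. *)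

theory Defs
  imports Complex_Main "Jordan_Normal_Form.Matrix"
begin

definition gcoef :: "real \<Rightarrow> nat \<Rightarrow> real" where
  "gcoef \<gamma> k = (-1) ^ k * (\<gamma> gchoose k)"

text \<open>Shift parameters (p,q): only (1,0) and (1,-1) are considered.\<close>
datatype shift = PQ_1_0 | PQ_1_m1

definition wcoef :: "shift \<Rightarrow> real \<Rightarrow> nat \<Rightarrow> real" where
  "wcoef s \<gamma> k = (case s of
      PQ_1_0 \<Rightarrow> (if k = 0 then \<gamma> / 2 * gcoef \<gamma> 0
                else \<gamma> / 2 * gcoef \<gamma> k + (2 - \<gamma>) / 2 * gcoef \<gamma> (k - 1))
    | PQ_1_m1 \<Rightarrow> (if k < 2 then (2 + \<gamma>) / 4 * gcoef \<gamma> k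
                else (2 + \<gamma>) / 4 * gcoef \<gamma> k + (2 - \<gamma>) / 4 * gcoef \<gamma> (k - 2)))"

definition ccoef :: "shift \<Rightarrow> real \<Rightarrow> real" where
  "ccoef s \<gamma> = (case s of
      PQ_1_0 \<Rightarrow> (7 * \<gamma> - 3 * \<gamma>\<^sup>2) / 24
    | PQ_1_m1 \<Rightarrow> (\<gamma> - 3 * \<gamma>\<^sup>2 + 12) / 24)"

definition Amat :: "shift \<Rightarrow> real \<Rightarrow> nat \<Rightarrow> real mat" where
  "Amat s \<gamma> m = mat (m - 1) (m - 1)
     (\<lambda>(i, j). if j \<le> i + 1 then wcoef s \<gamma> (i + 1 - j) else 0)"

definition tridiag :: "nat \<Rightarrow> real mat" where
  "tridiag n = mat n n (\<lambda>(i, j). if i = j then -2 else if i = j + 1 \<or> j = i + 1 then 1 else 0)"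

definition Cmat :: "shift \<Rightarrow> real \<Rightarrow> nat \<Rightarrow> real mat" where
  "Cmat s \<gamma> m = 1\<^sub>m (m - 1) + ccoef s \<gamma> \<cdot>\<^sub>m tridiag (m - 1)"

definition kron :: "real mat \<Rightarrow> real mat \<Rightarrow> real mat" where
  "kron A B = mat (dim_row A * dim_row B) (dim_col A * dim_col B)
     (\<lambda>(i, j). A $$ (i div dim_row B, j div dim_col B) * B $$ (i mod dim_row B, j mod dim_col B))"

definition matinv :: "real mat \<Rightarrow> real mat" where
  "matinv A = (SOME B. inverts_mat A B \<and> inverts_mat B A)"

definition CXm where "CXm s \<alpha> Nx Ny = kron (1\<^sub>m (Ny - 1)) (Cmat s \<alpha> Nx)"
definition CYm where "CYm s \<beta> Nx Ny = kron (Cmat s \<beta> Ny) (1\<^sub>m (Nx - 1))"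
definition DXm where "DXm s \<alpha> Nx Ny \<tau> h K1p K2p =
   (\<tau> / (2 * h powr \<alpha>)) \<cdot>\<^sub>m kron (1\<^sub>m (Ny - 1))
      (K1p \<cdot>\<^sub>m Amat s \<alpha> Nx + K2p \<cdot>\<^sub>m transpose_mat (Amat s \<alpha> Nx))"
definition DYm where "DYm s \<beta> Nx Ny \<tau> h K1m K2m =
   (\<tau> / (2 * h powr \<beta>)) \<cdot>\<^sub>m kron
      (K1m \<cdot>\<^sub>m Amat s \<beta> Ny + K2m \<cdot>\<^sub>m transpose_mat (Amat s \<beta> Ny)) (1\<^sub>m (Nx - 1))"

definition uncond_stable :: "shift \<Rightarrow> real \<Rightarrow> real \<Rightarrow> bool" where
  "uncond_stable s \<alpha> \<beta> \<longleftrightarrow>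
    (\<forall>Nx Ny \<tau> h K1p K2p K1m K2m.
       1 \<le> Nx \<and> 1 \<le> Ny \<and> 0 < \<tau> \<and> 0 < h \<and>
       0 \<le> K1p \<and> 0 \<le> K2p \<and> 0 \<le> K1m \<and> 0 \<le> K2m \<and>
       K1p\<^sup>2 + K2p\<^sup>2 \<noteq> 0 \<and> K1m\<^sup>2 + K2m\<^sup>2 \<noteq> 0 \<longrightarrow>
       (let Cx = CXm s \<alpha> Nx Ny; Cy = CYm s \<beta> Nx Ny;
            Dx = DXm s \<alpha> Nx Ny \<tau> h K1p K2p; Dy = DYm s \<beta> Nx Ny \<tau> h K1m K2m;
            G = matinv (Cy - Dy) * matinv (Cx - Dx) * (Cx + Dx) * (Cy + Dy);
            d = (Nx - 1) * (Ny - 1)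
        in invertible_mat (Cy - Dy) \<and> invertible_mat (Cx - Dx) \<and>
           (\<forall>i<d. \<forall>j<d. (\<lambda>n. (G ^\<^sub>m n) $$ (i, j)) \<longlonglongrightarrow> 0)))"

end

theory Submission
  imports Defs "Jordan_Normal_Form.Spectral_Radius"
begin

text \<open>Both schemes are ADI factorisations: the amplification matrix is the Kronecker product
  \<open>R\<^sub>y \<otimes> R\<^sub>x\<close> of one-dimensional Crank--Nicolson matrices \<open>R = (C - D)\<^sup>-\<^sup>1 (C + D)\<close>,
  so it suffices that \<open>R\<^sup>n \<rightarrow> 0\<close> in each direction. There \<open>C\<close> is symmetric positive definite
  because \<open>0 \<le> c\<^sup>\<gamma> \<le> 1/4\<close>, and \<open>D\<close> is negative definite; then \<open>R\<close> strictly decreases the energy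
  \<open>\<langle>x, C x\<rangle>\<close>, which forces every eigenvalue of \<open>R\<close> into the open unit disc.

  Negative definiteness of \<open>A\<^sub>\<gamma>\<close> is the heart of the matter. Its Toeplitz kernel is the second
  difference of a kernel \<open>b\<close> built from the coefficients of \<open>(1 - z)\<^sup>\<gamma>\<^sup>-\<^sup>2\<close>, so summation by
  parts turns \<open>\<langle>x, A x\<rangle>\<close> into minus the \<open>b\<close>-form of the differences of \<open>x\<close>. The kernel
  \<open>b\<close> is nonnegative, nonincreasing and convex from lag 2 on; writing it as a nonnegative
  combination of tent kernels (which give sums of squares) bounds its form from below by a
  margin computed from \<open>b\<^sub>0, \<dots>, b\<^sub>3\<close>. That margin is positive for \<open>1 < \<gamma> \<le> 2\<close> when
  \<open>(p, q) = (1, 0)\<close> and for \<open>\<gamma> \<ge> 3/2\<close> when \<open>(p, q) = (1, -1)\<close>.\<close>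

section \<open>Quadratic forms and the Crank--Nicolson step\<close>

definition quad_form :: "real mat \<Rightarrow> nat \<Rightarrow> (nat \<Rightarrow> real) \<Rightarrow> real" where
  "quad_form M n x = (\<Sum>i<n. \<Sum>j<n. M $$ (i, j) * x i * x j)"

definition mat_app :: "real mat \<Rightarrow> nat \<Rightarrow> (nat \<Rightarrow> real) \<Rightarrow> nat \<Rightarrow> real" where
  "mat_app M n x i = (\<Sum>j<n. M $$ (i, j) * x j)"

definition pos_def_form :: "real mat \<Rightarrow> nat \<Rightarrow> bool" where
  "pos_def_form M n \<longleftrightarrow> (\<forall>x. (\<exists>i<n. x i \<noteq> 0) \<longrightarrow> 0 < quad_form M n x)"

definition neg_def_form :: "real mat \<Rightarrow> nat \<Rightarrow> bool" where
  "neg_def_form M n \<longleftrightarrow> (\<forall>x. (\<exists>i<n. x i \<noteq> 0) \<longrightarrow> quad_form M n x < 0)"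

lemma quad_form_cong: "(\<And>i. i < n \<Longrightarrow> x i = y i) \<Longrightarrow> quad_form M n x = quad_form M n y"
  unfolding quad_form_def by (intro sum.cong refl) auto

lemma quad_form_eq_sum_mat_app: "quad_form M n x = (\<Sum>i<n. x i * mat_app M n x i)"
  unfolding quad_form_def mat_app_def by (simp add: sum_distrib_left mult.commute mult.left_commute)

lemma quad_form_zero: "(\<And>i. i < n \<Longrightarrow> x i = 0) \<Longrightarrow> quad_form M n x = 0"
  unfolding quad_form_def by auto

lemma mat_app_zero: "(\<And>i. i < n \<Longrightarrow> x i = 0) \<Longrightarrow> mat_app M n x j = 0"
  unfolding mat_app_def by auto

lemma pos_def_form_nonneg: "pos_def_form C n \<Longrightarrow> 0 \<le> quad_form C n x"
  unfolding pos_def_form_def using quad_form_zero[of n x C]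
  by (cases "\<exists>i<n. x i \<noteq> 0") (auto simp: less_imp_le)

lemma mat_app_mult_mat_vec:
  assumes "M \<in> carrier_mat n n" "v \<in> carrier_vec n" "i < n"
  shows "(M *\<^sub>v v) $ i = mat_app M n (\<lambda>j. v $ j) i"
  using assms unfolding mat_app_def by (auto simp: scalar_prod_def atLeast0LessThan intro!: sum.cong)

lemma mat_app_minus:
  assumes "C \<in> carrier_mat n n" "D \<in> carrier_mat n n" "i < n"
  shows "mat_app (C - D) n x i = mat_app C n x i - mat_app D n x i"
  using assms unfolding mat_app_def sum_subtractf[symmetric]
  by (intro sum.cong refl) (auto simp: left_diff_distrib)

lemma mat_app_add:
  assumes "C \<in> carrier_mat n n" "D \<in> carrier_mat n n" "i < n"
  shows "mat_app (C + D) n x i = mat_app C n x i + mat_app D n x i"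
  using assms unfolding mat_app_def sum.distrib[symmetric]
  by (intro sum.cong refl) (auto simp: distrib_right)

lemma mat_app_mult:
  assumes "A \<in> carrier_mat n n" "B \<in> carrier_mat n n" "i < n"
  shows "mat_app (A * B) n x i = mat_app A n (mat_app B n x) i"
proof -
  have "mat_app (A * B) n x i = (\<Sum>j<n. (\<Sum>k<n. A $$ (i, k) * B $$ (k, j)) * x j)"
    unfolding mat_app_def using assms
    by (intro sum.cong refl) (auto simp: scalar_prod_def atLeast0LessThan)
  also have "\<dots> = (\<Sum>k<n. A $$ (i, k) * (\<Sum>j<n. B $$ (k, j) * x j))"
    by (simp add: sum_distrib_left sum_distrib_right mult.assoc) (rule sum.swap)
  finally show ?thesis unfolding mat_app_def .
qed

lemma quad_form_smult_add_transpose: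
  assumes "A \<in> carrier_mat n n"
  shows "quad_form (k \<cdot>\<^sub>m (a \<cdot>\<^sub>m A + b \<cdot>\<^sub>m transpose_mat A)) n x = k * (a + b) * quad_form A n x"
proof -
  have "quad_form (k \<cdot>\<^sub>m (a \<cdot>\<^sub>m A + b \<cdot>\<^sub>m transpose_mat A)) n x
      = (\<Sum>i<n. \<Sum>j<n. (k * a) * (A $$ (i, j) * x i * x j) + (k * b) * (A $$ (j, i) * x i * x j))"
    unfolding quad_form_def using assms by (intro sum.cong refl) (simp add: algebra_simps)
  also have "\<dots> = (k * a) * quad_form A n x + (k * b) * (\<Sum>i<n. \<Sum>j<n. A $$ (j, i) * x i * x j)"
    unfolding quad_form_def by (simp only: sum.distrib sum_distrib_left)
  also have "(\<Sum>i<n. \<Sum>j<n. A $$ (j, i) * x i * x j) = quad_form A n x"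
    unfolding quad_form_def by (subst sum.swap) (simp add: mult.commute mult.left_commute)
  finally show ?thesis by (simp add: algebra_simps)
qed

text \<open>The energy identity of the Crank--Nicolson step: with \<open>s = w + v\<close> and \<open>t = w - v\<close>,
  \<open>(C - D) w = (C + D) v\<close> means \<open>C t = D s\<close>, and symmetry of \<open>C\<close> turns
  \<open>\<langle>s, C t\<rangle>\<close> into \<open>\<langle>w, C w\<rangle> - \<langle>v, C v\<rangle>\<close>.\<close>
lemma quad_form_step_decrease:
  assumes C: "C \<in> carrier_mat n n" and D: "D \<in> carrier_mat n n" and R: "R \<in> carrier_mat n n"
    and sym: "\<And>i j. i < n \<Longrightarrow> j < n \<Longrightarrow> C $$ (i, j) = C $$ (j, i)"
    and pos: "pos_def_form C n" and neg: "neg_def_form D n"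
    and step: "(C - D) * R = C + D"
    and v: "\<exists>i<n. v i \<noteq> 0"
  shows "quad_form C n (mat_app R n v) < quad_form C n v"
proof -
  define w where "w = mat_app R n v"
  define s where "s = (\<lambda>i. w i + v i)"
  define t where "t = (\<lambda>i. w i - v i)"
  have Ct: "mat_app C n t i = mat_app D n s i" if i: "i < n" for i
  proof -
    have "mat_app (C - D) n w i = mat_app ((C - D) * R) n v i"
      unfolding w_def using mat_app_mult[OF minus_carrier_mat[OF D, of C] R i] by simp
    then have "mat_app (C - D) n w i = mat_app (C + D) n v i" unfolding step .
    then have "mat_app C n w i - mat_app D n w i = mat_app C n v i + mat_app D n v i"
      using mat_app_minus[OF C D i] mat_app_add[OF C D i] by simp
    then show ?thesis
      unfolding s_def t_def mat_app_def by (simp add: sum.distrib sum_subtractf algebra_simps)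
  qed
  have swap: "(\<Sum>i<n. \<Sum>j<n. C $$ (i, j) * v i * w j) = (\<Sum>i<n. \<Sum>j<n. C $$ (i, j) * w i * v j)"
    by (subst sum.swap) (intro sum.cong refl, simp add: sym)
  have "(\<Sum>i<n. s i * mat_app C n t i) = quad_form C n w - quad_form C n v
      + ((\<Sum>i<n. \<Sum>j<n. C $$ (i, j) * v i * w j) - (\<Sum>i<n. \<Sum>j<n. C $$ (i, j) * w i * v j))"
    unfolding s_def t_def mat_app_def quad_form_def
    by (simp add: sum_distrib_left sum.distrib sum_subtractf ring_distribs mult.assoc mult.left_commute)
  also have "(\<Sum>i<n. s i * mat_app C n t i) = quad_form D n s"
    by (simp add: quad_form_eq_sum_mat_app Ct)
  finally have energy: "quad_form C n w - quad_form C n v = quad_form D n s"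
    unfolding swap by simp
  show ?thesis
  proof (cases "\<exists>i<n. s i \<noteq> 0")
    case True
    then show ?thesis using neg energy unfolding neg_def_form_def w_def by fastforce
  next
    case False
    then have "quad_form C n t = 0"
      using Ct mat_app_zero[of n s D] by (simp add: quad_form_eq_sum_mat_app)
    moreover from v obtain i where "i < n" "t i \<noteq> 0"
      using False unfolding s_def t_def by fastforce
    ultimately show ?thesis using pos unfolding pos_def_form_def by fastforce
  qed
qed

lemma matinv_unique:
  assumes P: "P \<in> carrier_mat n n" and B: "B \<in> carrier_mat n n"
    and PB: "P * B = 1\<^sub>m n" and BP: "B * P = 1\<^sub>m n"
  shows "matinv P = B"
proof -
  have "\<exists>B. inverts_mat P B \<and> inverts_mat B P"
    using P B PB BP unfolding inverts_mat_def by auto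
  then have "inverts_mat P (matinv P) \<and> inverts_mat (matinv P) P"
    unfolding matinv_def by (rule someI_ex)
  then have PB': "P * matinv P = 1\<^sub>m n" and B'P: "matinv P * P = 1\<^sub>m (dim_row (matinv P))"
    using P unfolding inverts_mat_def by auto
  have B': "matinv P \<in> carrier_mat n n"
    using arg_cong[OF B'P, of dim_col] arg_cong[OF PB', of dim_col] P by auto
  have "B = B * (P * matinv P)" using PB' B by simp
  also have "\<dots> = (B * P) * matinv P" using B P B' by (simp add: assoc_mult_mat)
  also have "\<dots> = matinv P" using BP B' by simp
  finally show ?thesis by simp
qed

lemma matinv_inverse:
  assumes P: "P \<in> carrier_mat n n" and inv: "invertible_mat P"
  shows "matinv P \<in> carrier_mat n n" "P * matinv P = 1\<^sub>m n" "matinv P * P = 1\<^sub>m n"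
proof -
  obtain B where "inverts_mat P B" "inverts_mat B P"
    using inv unfolding invertible_mat_def by blast
  then have PB: "P * B = 1\<^sub>m n" and BP: "B * P = 1\<^sub>m (dim_row B)"
    using P unfolding inverts_mat_def by auto
  have B: "B \<in> carrier_mat n n"
    using arg_cong[OF PB, of dim_col] arg_cong[OF BP, of dim_col] P by auto
  with PB BP have "B \<in> carrier_mat n n" "P * B = 1\<^sub>m n" "B * P = 1\<^sub>m n" by auto
  then show "matinv P \<in> carrier_mat n n" "P * matinv P = 1\<^sub>m n" "matinv P * P = 1\<^sub>m n"
    using matinv_unique[OF P B] by auto
qed

lemma invertible_mat_of_inverse:
  assumes "P \<in> carrier_mat n n" "B \<in> carrier_mat n n" "P * B = 1\<^sub>m n" "B * P = 1\<^sub>m n"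
  shows "invertible_mat P"
  using assms unfolding invertible_mat_def inverts_mat_def by auto

lemma inverse_of_pos_def_minus_neg_def:
  assumes C: "C \<in> carrier_mat n n" and D: "D \<in> carrier_mat n n"
    and pos: "pos_def_form C n" and neg: "neg_def_form D n"
  obtains B where "B \<in> carrier_mat n n" "(C - D) * B = 1\<^sub>m n" "B * (C - D) = 1\<^sub>m n"
proof -
  have CD: "C - D \<in> carrier_mat n n" by (rule minus_carrier_mat[OF D])
  have "v = 0\<^sub>v n" if v: "v \<in> carrier_vec n" and ker: "(C - D) *\<^sub>v v = 0\<^sub>v n" for v
  proof (rule ccontr)
    assume "v \<noteq> 0\<^sub>v n"
    then have nz: "\<exists>i<n. v $ i \<noteq> 0" using v by (auto simp: vec_eq_iff)
    have "mat_app C n (\<lambda>j. v $ j) k = mat_app D n (\<lambda>j. v $ j) k" if "k < n" for k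
      using ker mat_app_mult_mat_vec[OF CD v that] mat_app_minus[OF C D that] that by simp
    then have "quad_form C n (\<lambda>j. v $ j) = quad_form D n (\<lambda>j. v $ j)"
      by (simp add: quad_form_eq_sum_mat_app)
    with nz pos neg show False unfolding pos_def_form_def neg_def_form_def by fastforce
  qed
  then have "det (C - D) \<noteq> 0" using det_0_iff_vec_prod_zero[OF CD] by auto
  from det_non_zero_imp_unit[OF CD this, of "()"] show ?thesis
    using that unfolding Units_def by (auto simp: ring_mat_simps)
qed

text \<open>An eigenvector \<open>a + i b\<close> of the real matrix \<open>R\<close> for \<open>\<lambda>\<close> gives
  \<open>q(R a) + q(R b) = |\<lambda>|\<^sup>2 (q a + q b)\<close> for every quadratic form \<open>q\<close>.\<close>
lemma quad_form_rotation:
  "quad_form C n (\<lambda>i. r * a i - s * b i) + quad_form C n (\<lambda>i. s * a i + r * b i)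
     = (r\<^sup>2 + s\<^sup>2) * (quad_form C n a + quad_form C n b)"
proof -
  have "C $$ (i, j) * (r * a i - s * b i) * (r * a j - s * b j)
        + C $$ (i, j) * (s * a i + r * b i) * (s * a j + r * b j)
      = (r\<^sup>2 + s\<^sup>2) * (C $$ (i, j) * a i * a j + C $$ (i, j) * b i * b j)" for i j
    by (simp add: algebra_simps power2_eq_square)
  then show ?thesis
    unfolding quad_form_def by (simp only: sum.distrib [symmetric] sum_distrib_left distrib_left)
qed

lemma eigenvalue_norm_less_1_of_quad_form_decrease:
  fixes R C :: "real mat"
  assumes R: "R \<in> carrier_mat n n" and pos: "pos_def_form C n"
    and decr: "\<And>x. (\<exists>i<n. x i \<noteq> 0) \<Longrightarrow> quad_form C n (mat_app R n x) < quad_form C n x"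
    and ev: "eigenvalue (map_mat complex_of_real R) l"
  shows "cmod l < 1"
proof -
  let ?Rc = "map_mat complex_of_real R"
  obtain v where "eigenvector ?Rc v l" using ev unfolding eigenvalue_def by auto
  then have v: "v \<in> carrier_vec n" "v \<noteq> 0\<^sub>v n" "?Rc *\<^sub>v v = l \<cdot>\<^sub>v v"
    using R unfolding eigenvector_def by auto
  define a where "a = (\<lambda>i. Re (v $ i))"
  define b where "b = (\<lambda>i. Im (v $ i))"
  have comp: "(\<Sum>j<n. complex_of_real (R $$ (i, j)) * v $ j) = l * v $ i" if "i < n" for i
  proof -
    have "(?Rc *\<^sub>v v) $ i = (\<Sum>j<n. complex_of_real (R $$ (i, j)) * v $ j)"
      using R v(1) that by (auto simp: scalar_prod_def atLeast0LessThan intro!: sum.cong)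
    then show ?thesis using v that by simp
  qed
  have "mat_app R n a i = Re l * a i - Im l * b i" if "i < n" for i
    using arg_cong[OF comp[OF that], of Re] unfolding mat_app_def a_def b_def by (simp add: Re_sum)
  moreover have "mat_app R n b i = Im l * a i + Re l * b i" if "i < n" for i
    using arg_cong[OF comp[OF that], of Im] unfolding mat_app_def a_def b_def
    by (simp add: Im_sum algebra_simps)
  ultimately have "quad_form C n (mat_app R n a) = quad_form C n (\<lambda>i. Re l * a i - Im l * b i)"
    "quad_form C n (mat_app R n b) = quad_form C n (\<lambda>i. Im l * a i + Re l * b i)"
    by (auto intro: quad_form_cong)
  then have rot: "quad_form C n (mat_app R n a) + quad_form C n (mat_app R n b)
      = (cmod l)\<^sup>2 * (quad_form C n a + quad_form C n b)"
    using quad_form_rotation[of C n "Re l" a "Im l" b] by (simp add: cmod_power2)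
  have le: "quad_form C n (mat_app R n x) \<le> quad_form C n x" for x
    using decr[of x] quad_form_zero[of n x C] quad_form_zero[of n "mat_app R n x" C]
      mat_app_zero[of n x R] by (cases "\<exists>i<n. x i \<noteq> 0") force+
  from v(1,2) obtain i where "i < n" "v $ i \<noteq> 0" by (auto simp: vec_eq_iff)
  then have "(\<exists>i<n. a i \<noteq> 0) \<or> (\<exists>i<n. b i \<noteq> 0)"
    unfolding a_def b_def by (auto simp: complex_eq_iff)
  then have less: "quad_form C n (mat_app R n a) + quad_form C n (mat_app R n b)
        < quad_form C n a + quad_form C n b"
  proof (elim disjE)
    assume "\<exists>i<n. a i \<noteq> 0"
    from decr[OF this] le[of b] show ?thesis by linarith
  next
    assume "\<exists>i<n. b i \<noteq> 0"
    from decr[OF this] le[of a] show ?thesis by linarith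
  qed
  moreover have nonneg: "0 \<le> quad_form C n a + quad_form C n b"
    using pos_def_form_nonneg[OF pos] by (simp add: add_nonneg_nonneg)
  ultimately have "(cmod l)\<^sup>2 * (quad_form C n a + quad_form C n b) < quad_form C n a + quad_form C n b"
    "0 \<le> (cmod l)\<^sup>2 * (quad_form C n a + quad_form C n b)"
    unfolding rot by simp_all
  then have "(cmod l)\<^sup>2 < 1" using nonneg by (simp add: mult_less_cancel_right2)
  then show ?thesis by (simp add: abs_square_less_1)
qed

lemma eigenvalue_smult_mat:
  fixes A :: "complex mat"
  assumes A: "A \<in> carrier_mat n n" and c: "c \<noteq> 0" and ev: "eigenvalue (c \<cdot>\<^sub>m A) m"
  shows "eigenvalue A (m / c)"
proof -
  obtain v where v: "v \<in> carrier_vec n" "v \<noteq> 0\<^sub>v n" "(c \<cdot>\<^sub>m A) *\<^sub>v v = m \<cdot>\<^sub>v v"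
    using ev A unfolding eigenvalue_def eigenvector_def by auto
  have "A *\<^sub>v v = (m / c) \<cdot>\<^sub>v v"
  proof (rule eq_vecI)
    fix k assume "k < dim_vec ((m / c) \<cdot>\<^sub>v v)"
    then have k: "k < n" using v by simp
    have "c * (A *\<^sub>v v) $ k = m * v $ k"
      using arg_cong[OF v(3), of "\<lambda>w. w $ k"] k A v(1)
      by (simp add: scalar_prod_def sum_distrib_left mult.assoc)
    then show "(A *\<^sub>v v) $ k = ((m / c) \<cdot>\<^sub>v v) $ k" using c k v(1) by (simp add: field_simps)
  qed (use A v in simp)
  then show ?thesis using v A unfolding eigenvalue_def eigenvector_def by auto
qed

lemma smult_pow_mat:
  assumes "A \<in> carrier_mat n n"
  shows "(c \<cdot>\<^sub>m A) ^\<^sub>m k = (c ^ k) \<cdot>\<^sub>m (A ^\<^sub>m k :: 'a :: comm_ring_1 mat)"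
proof (induction k)
  case 0 show ?case by (rule eq_matI) auto
next
  case (Suc k)
  have Ak: "A ^\<^sub>m k \<in> carrier_mat n n" using assms by simp
  have "(c ^ k \<cdot>\<^sub>m A ^\<^sub>m k) * (c \<cdot>\<^sub>m A) = c ^ k \<cdot>\<^sub>m (c \<cdot>\<^sub>m (A ^\<^sub>m k * A))"
    using mult_smult_assoc_mat[OF Ak smult_carrier_mat[OF assms]] mult_smult_distrib[OF Ak assms]
    by simp
  then show ?case using Suc by (auto intro!: eq_matI)
qed

text \<open>Scaling by \<open>c = 2 / (1 + \<rho>)\<close> keeps the spectral radius below 1, so the powers of the
  scaled matrix are bounded and those of \<open>A\<close> decay like \<open>c\<^sup>-\<^sup>k\<close>.\<close>
lemma mat_power_tendsto_zero:
  fixes A :: "complex mat"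
  assumes A: "A \<in> carrier_mat n n" and ev: "\<And>l. eigenvalue A l \<Longrightarrow> cmod l < 1"
    and ij: "i < n" "j < n"
  shows "(\<lambda>k. (A ^\<^sub>m k) $$ (i, j)) \<longlonglongrightarrow> 0"
proof -
  have n: "0 < n" using ij by auto
  define \<rho> where "\<rho> = spectral_radius A"
  from spectral_radius_mem_max(1)[OF A n] obtain l where "eigenvalue A l" "\<rho> = cmod l"
    unfolding \<rho>_def spectrum_def by auto
  with ev have \<rho>: "0 \<le> \<rho>" "\<rho> < 1" by auto
  define c where "c = 2 / (1 + \<rho>)"
  have c: "1 < c" "c * \<rho> < 1" using \<rho> unfolding c_def by (simp_all add: field_simps)
  let ?B = "complex_of_real c \<cdot>\<^sub>m A"
  have B: "?B \<in> carrier_mat n n" using A by simp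
  have "spectral_radius ?B < 1"
  proof -
    from spectral_radius_mem_max(1)[OF B n] obtain m where
      m: "eigenvalue ?B m" "spectral_radius ?B = cmod m" unfolding spectrum_def by auto
    have "eigenvalue A (m / complex_of_real c)"
      by (rule eigenvalue_smult_mat[OF A _ m(1)]) (use c in simp)
    then have "cmod (m / complex_of_real c) \<le> \<rho>"
      using spectral_radius_mem_max(2)[OF A n] unfolding \<rho>_def spectrum_def by auto
    moreover have "cmod (m / complex_of_real c) = cmod m / c" using c by (simp add: norm_divide)
    ultimately have "cmod m / c \<le> \<rho>" by simp
    then have "cmod m \<le> c * \<rho>" using c by (simp add: pos_divide_le_eq mult.commute)
    then show ?thesis using m(2) c by linarith
  qed
  from spectral_radius_jnf_norm_bound_less_1_upper_triangular[OF B this]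
  obtain M where M: "\<And>k. norm_bound (?B ^\<^sub>m k) M" by auto
  have bound: "norm ((A ^\<^sub>m k) $$ (i, j)) \<le> norm ((1 / c) ^ k) * M" for k
  proof -
    have "norm ((?B ^\<^sub>m k) $$ (i, j)) \<le> M" using M[of k] ij A unfolding norm_bound_def by simp
    moreover have "(?B ^\<^sub>m k) $$ (i, j) = complex_of_real (c ^ k) * (A ^\<^sub>m k) $$ (i, j)"
      unfolding smult_pow_mat[OF A] using ij A by simp
    ultimately have "c ^ k * norm ((A ^\<^sub>m k) $$ (i, j)) \<le> M"
      using c by (simp add: norm_mult norm_power)
    then show ?thesis using c by (simp add: power_one_over pos_le_divide_eq mult.commute)
  qed
  have "(\<lambda>k. (1 / c) ^ k) \<longlonglongrightarrow> 0" using c by (intro LIMSEQ_power_zero) simp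
  then show ?thesis by (rule tendsto_0_le) (use bound in \<open>auto intro: always_eventually\<close>)
qed

lemma power_tendsto_zero_of_pos_def_neg_def:
  assumes C: "C \<in> carrier_mat n n" and D: "D \<in> carrier_mat n n"
    and sym: "\<And>i j. i < n \<Longrightarrow> j < n \<Longrightarrow> C $$ (i, j) = C $$ (j, i)"
    and pos: "pos_def_form C n" and neg: "neg_def_form D n"
  shows "invertible_mat (C - D)"
    and "i < n \<Longrightarrow> j < n \<Longrightarrow> (\<lambda>k. ((matinv (C - D) * (C + D)) ^\<^sub>m k) $$ (i, j)) \<longlonglongrightarrow> 0"
proof -
  obtain B where B: "B \<in> carrier_mat n n" "(C - D) * B = 1\<^sub>m n" "B * (C - D) = 1\<^sub>m n"
    using inverse_of_pos_def_minus_neg_def[OF C D pos neg] .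
  have CD: "C - D \<in> carrier_mat n n" by (rule minus_carrier_mat[OF D])
  show inv: "invertible_mat (C - D)" by (rule invertible_mat_of_inverse[OF CD B])
  define R where "R = matinv (C - D) * (C + D)"
  have Pi: "matinv (C - D) \<in> carrier_mat n n" "(C - D) * matinv (C - D) = 1\<^sub>m n"
    using matinv_inverse[OF CD inv] by auto
  have R: "R \<in> carrier_mat n n" unfolding R_def using Pi C D by simp
  have "(C - D) * R = C + D"
    unfolding R_def using Pi C D CD
    by (simp add: assoc_mult_mat[symmetric, of "C - D" n n "matinv (C - D)" n "C + D" n])
  then have decr: "quad_form C n (mat_app R n x) < quad_form C n x" if "\<exists>i<n. x i \<noteq> 0" for x
    using quad_form_step_decrease[OF C D R sym pos neg _ that] by blast
  assume ij: "i < n" "j < n"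
  have "(\<lambda>k. (map_mat complex_of_real R ^\<^sub>m k) $$ (i, j)) \<longlonglongrightarrow> 0"
    using eigenvalue_norm_less_1_of_quad_form_decrease[OF R pos decr] R ij
    by (intro mat_power_tendsto_zero[of _ n]) auto
  then have "(\<lambda>k. complex_of_real ((R ^\<^sub>m k) $$ (i, j))) \<longlonglongrightarrow> 0"
    using R ij by (simp add: of_real_hom.mat_hom_pow[OF R, symmetric])
  then show "(\<lambda>k. ((matinv (C - D) * (C + D)) ^\<^sub>m k) $$ (i, j)) \<longlonglongrightarrow> 0"
    unfolding R_def[symmetric] using tendsto_of_real_iff[where 'a = complex, of "\<lambda>k. (R ^\<^sub>m k) $$ (i, j)" 0] by simp
qed

section \<open>Toeplitz forms\<close>

definition toeplitz_form :: "(int \<Rightarrow> real) \<Rightarrow> int \<Rightarrow> (int \<Rightarrow> real) \<Rightarrow> real" where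
  "toeplitz_form K N X = (\<Sum>i\<in>{0..N}. \<Sum>j\<in>{0..N}. K (i - j) * X i * X j)"

definition vanishes_outside :: "int \<Rightarrow> (int \<Rightarrow> real) \<Rightarrow> bool" where
  "vanishes_outside N X \<longleftrightarrow> (\<forall>i. i < 0 \<or> N < i \<longrightarrow> X i = 0)"

definition zero_ext :: "nat \<Rightarrow> (nat \<Rightarrow> real) \<Rightarrow> int \<Rightarrow> real" where
  "zero_ext n x i = (if 0 \<le> i \<and> i < int n then x (nat i) else 0)"

definition kdelta :: "int \<Rightarrow> int \<Rightarrow> real" where
  "kdelta d k = (if k = d then 1 else 0)"

lemma toeplitz_form_cong:
  "(\<And>k. \<bar>k\<bar> \<le> N \<Longrightarrow> K k = L k) \<Longrightarrow> toeplitz_form K N X = toeplitz_form L N X"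
  unfolding toeplitz_form_def by (intro sum.cong refl) auto

lemma toeplitz_form_linear:
  "toeplitz_form (\<lambda>k. a * K k + b * L k) N X = a * toeplitz_form K N X + b * toeplitz_form L N X"
proof -
  have "toeplitz_form (\<lambda>k. a * K k + b * L k) N X =
     (\<Sum>i\<in>{0..N}. \<Sum>j\<in>{0..N}. a * (K (i - j) * X i * X j) + b * (L (i - j) * X i * X j))"
    unfolding toeplitz_form_def by (intro sum.cong refl) (simp add: distrib_right mult.assoc)
  then show ?thesis
    unfolding toeplitz_form_def by (simp only: sum.distrib sum_distrib_left)
qed

lemma toeplitz_form_sum:
  assumes "finite M"
  shows "toeplitz_form (\<lambda>k. \<Sum>m\<in>M. c m * K m k) N X = (\<Sum>m\<in>M. c m * toeplitz_form (K m) N X)"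
proof -
  have "toeplitz_form (\<lambda>k. \<Sum>m\<in>M. c m * K m k) N X
      = (\<Sum>i\<in>{0..N}. \<Sum>j\<in>{0..N}. \<Sum>m\<in>M. c m * (K m (i - j) * X i * X j))"
    unfolding toeplitz_form_def by (intro sum.cong refl) (simp add: sum_distrib_right mult.assoc)
  also have "\<dots> = (\<Sum>m\<in>M. \<Sum>i\<in>{0..N}. \<Sum>j\<in>{0..N}. c m * (K m (i - j) * X i * X j))"
    by (subst sum.swap) (subst (2) sum.swap, rule refl)
  finally show ?thesis unfolding toeplitz_form_def by (simp only: sum_distrib_left)
qed

lemma toeplitz_form_reflect: "toeplitz_form (\<lambda>k. K (- k)) N X = toeplitz_form K N X"
  unfolding toeplitz_form_def
  by (subst sum.swap) (intro sum.cong refl, simp add: mult.commute mult.left_commute)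

lemma toeplitz_form_symmetrize:
  "toeplitz_form K N X = toeplitz_form (\<lambda>k. (K k + K (- k)) / 2) N X"
  using toeplitz_form_linear[of "1/2" K "1/2" "\<lambda>k. K (- k)" N X] toeplitz_form_reflect[of K N X]
  by (simp add: add_divide_distrib)

lemma toeplitz_form_kdelta:
  assumes "vanishes_outside N X"
  shows "toeplitz_form (kdelta d) N X = (\<Sum>i\<in>{0..N}. X i * X (i - d))"
proof -
  have "toeplitz_form (kdelta d) N X
      = (\<Sum>i\<in>{0..N}. \<Sum>j\<in>{0..N}. if j = i - d then X i * X j else 0)"
    unfolding toeplitz_form_def kdelta_def by (intro sum.cong refl) auto
  also have "\<dots> = (\<Sum>i\<in>{0..N}. if i - d \<in> {0..N} then X i * X (i - d) else 0)"
    by (intro sum.cong refl) (simp only: sum.delta[OF finite_atLeastAtMost])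
  also have "\<dots> = (\<Sum>i\<in>{0..N}. X i * X (i - d))"
    using assms unfolding vanishes_outside_def by (intro sum.cong refl) auto
  finally show ?thesis .
qed

lemma sum_shift_by_one:
  fixes g :: "int \<Rightarrow> real"
  assumes "g (-1) = 0" "g N = 0" "0 \<le> N"
  shows "(\<Sum>j\<in>{0..N}. g (j - 1)) = (\<Sum>j\<in>{0..N}. g j)"
proof -
  have "(\<Sum>j\<in>{0..N}. g (j - 1)) = (\<Sum>j\<in>{-1..N-1}. g j)"
    by (rule sum.reindex_bij_witness[where i="\<lambda>j. j + 1" and j="\<lambda>j. j - 1"]) auto
  also have "{-1..N-1} = insert (-1) {0..N-1}" "{0..N} = insert N {0..N-1}"
    using assms by auto
  ultimately show ?thesis using assms by simp
qed

lemma vanishes_outside_mono: "vanishes_outside N X \<Longrightarrow> N \<le> M \<Longrightarrow> vanishes_outside M X"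
  unfolding vanishes_outside_def by auto

lemma vanishes_outside_zero_ext: "vanishes_outside (int n - 1) (zero_ext n x)"
  unfolding vanishes_outside_def zero_ext_def by auto

lemma zero_ext_nonzero:
  assumes "\<exists>i<n. x i \<noteq> 0" "int n \<le> N"
  shows "\<exists>i\<in>{0..N}. zero_ext n x i \<noteq> 0"
proof -
  from assms obtain i where "i < n" "x i \<noteq> 0" by auto
  then show ?thesis using assms(2) by (intro bexI[of _ "int i"]) (auto simp: zero_ext_def)
qed

lemma sum_atLeastAtMost_int_eq_sum_lessThan:
  fixes f :: "int \<Rightarrow> real"
  assumes "int n \<le> N + 1" "\<And>i. i \<in> {0..N} \<Longrightarrow> \<not> i < int n \<Longrightarrow> f i = 0"
  shows "(\<Sum>i\<in>{0..N}. f i) = (\<Sum>i<n. f (int i))"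
proof -
  have "(\<Sum>i\<in>{0..N}. f i) = (\<Sum>i\<in>{0..<int n}. f i)"
    using assms by (intro sum.mono_neutral_right) auto
  also have "{0..<int n} = int ` {..<n}"
    by (simp add: image_int_atLeastLessThan[of 0 n, simplified] lessThan_atLeast0)
  finally show ?thesis by (simp add: sum.reindex)
qed

lemma quad_form_eq_toeplitz_form:
  assumes K: "\<And>i j. i < n \<Longrightarrow> j < n \<Longrightarrow> M $$ (i, j) = K (int i - int j)"
    and N: "int n \<le> N"
  shows "quad_form M n x = toeplitz_form K N (zero_ext n x)"
proof -
  have inner: "(\<Sum>j\<in>{0..N}. K (i - j) * zero_ext n x i * zero_ext n x j)
      = (\<Sum>j<n. K (i - int j) * zero_ext n x i * x j)" for i
    using N by (subst sum_atLeastAtMost_int_eq_sum_lessThan) (auto simp: zero_ext_def)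
  have "toeplitz_form K N (zero_ext n x)
      = (\<Sum>i\<in>{0..N}. \<Sum>j<n. K (i - int j) * zero_ext n x i * x j)"
    unfolding toeplitz_form_def by (simp only: inner)
  also have "\<dots> = (\<Sum>i<n. \<Sum>j<n. K (int i - int j) * zero_ext n x (int i) * x j)"
    using N by (subst sum_atLeastAtMost_int_eq_sum_lessThan) (auto simp: zero_ext_def)
  also have "\<dots> = quad_form M n x"
    unfolding quad_form_def by (intro sum.cong refl) (simp add: zero_ext_def K)
  finally show ?thesis by simp
qed

lemma vanishes_of_recurrence:
  fixes X :: "int \<Rightarrow> real"
  assumes "X (-1) = 0" and rec: "\<And>i. 0 \<le> i \<Longrightarrow> i \<le> N \<Longrightarrow> X i = \<sigma> * X (i - 1)"
    and i: "0 \<le> i" "i \<le> N"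
  shows "X i = 0"
proof -
  have "int k \<le> N \<Longrightarrow> X (int k) = 0" for k
  proof (induction k)
    case 0 then show ?case using rec[of 0] assms(1) by simp
  next
    case (Suc k) then show ?case using rec[of "int (Suc k)"] by simp
  qed
  then show "X i = 0" using i by (metis nonneg_int_cases)
qed

lemma toeplitz_form_three_point:
  assumes "vanishes_outside N X"
  shows "toeplitz_form (\<lambda>k. a * kdelta 0 k + b * (kdelta 1 k + kdelta (-1) k)) N X
       = a * (\<Sum>i\<in>{0..N}. X i * X i) + 2 * b * (\<Sum>i\<in>{0..N}. X i * X (i - 1))"
proof -
  have "(\<lambda>k. kdelta 1 (- k)) = kdelta (-1)" by (auto simp: kdelta_def)
  then have "toeplitz_form (kdelta (-1)) N X = toeplitz_form (kdelta 1) N X"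
    using toeplitz_form_reflect[of "kdelta 1" N X] by simp
  then show ?thesis
    using toeplitz_form_linear[of a "kdelta 0" b "\<lambda>k. kdelta 1 k + kdelta (-1) k" N X]
      toeplitz_form_linear[of 1 "kdelta 1" 1 "kdelta (-1)" N X]
      toeplitz_form_kdelta[OF assms, of 0] toeplitz_form_kdelta[OF assms, of 1]
    by simp
qed

lemma sum_square_shift:
  assumes "vanishes_outside (N - 1) X" "0 \<le> N"
  shows "(\<Sum>i\<in>{0..N}. (X i + e * X (i - 1))\<^sup>2)
       = (1 + e\<^sup>2) * (\<Sum>i\<in>{0..N}. X i * X i) + 2 * e * (\<Sum>i\<in>{0..N}. X i * X (i - 1))"
proof -
  have "(\<Sum>i\<in>{0..N}. (X i + e * X (i - 1))\<^sup>2) = (\<Sum>i\<in>{0..N}. X i * X i)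
      + e\<^sup>2 * (\<Sum>i\<in>{0..N}. X (i - 1) * X (i - 1)) + 2 * e * (\<Sum>i\<in>{0..N}. X i * X (i - 1))"
    by (simp add: sum.distrib sum_distrib_left power2_eq_square algebra_simps)
  moreover have "(\<Sum>i\<in>{0..N}. X (i - 1) * X (i - 1)) = (\<Sum>i\<in>{0..N}. X i * X i)"
    by (rule sum_shift_by_one[where g = "\<lambda>i. X i * X i"])
      (use assms in \<open>auto simp: vanishes_outside_def\<close>)
  ultimately show ?thesis by (simp add: algebra_simps)
qed

lemma toeplitz_form_tridiag_pos:
  assumes X: "vanishes_outside (N - 1) X" and N: "0 \<le> N" and c: "0 \<le> c" "c \<le> 1/4"
    and nz: "\<exists>i\<in>{0..N}. X i \<noteq> 0"
  shows "0 < toeplitz_form (\<lambda>k. (1 - 2 * c) * kdelta 0 k + c * (kdelta 1 k + kdelta (-1) k)) N X"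
proof -
  define S where "S = (\<Sum>i\<in>{0..N}. X i * X i)"
  define Q where "Q = (\<Sum>i\<in>{0..N}. (X i + X (i - 1))\<^sup>2)"
  have form: "toeplitz_form (\<lambda>k. (1 - 2 * c) * kdelta 0 k + c * (kdelta 1 k + kdelta (-1) k)) N X
      = (1 - 4 * c) * S + c * Q"
    using toeplitz_form_three_point[OF vanishes_outside_mono[OF X], of N "1 - 2 * c" c]
      sum_square_shift[OF X N, of 1]
    unfolding S_def Q_def by (simp add: algebra_simps)
  from nz obtain i0 where i0: "i0 \<in> {0..N}" "X i0 \<noteq> 0" by auto
  have "0 < X i0 * X i0" using i0 not_real_square_gt_zero by blast
  also have "X i0 * X i0 \<le> S" unfolding S_def using i0 by (intro member_le_sum) auto
  finally have S: "0 < S" .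
  have Q: "0 \<le> Q" unfolding Q_def by (intro sum_nonneg) simp
  show ?thesis
  proof (cases "c < 1/4")
    case True
    then show ?thesis unfolding form using S Q c by (simp add: add_pos_nonneg)
  next
    case False
    then have c: "c = 1/4" using c by simp
    have "0 < Q"
    proof (rule ccontr)
      assume "\<not> 0 < Q"
      then have "\<forall>i\<in>{0..N}. (X i + X (i - 1))\<^sup>2 = 0"
        using Q sum_nonneg_eq_0_iff[of "{0..N}" "\<lambda>i. (X i + X (i - 1))\<^sup>2"] unfolding Q_def by simp
      then have rec: "\<And>i. 0 \<le> i \<Longrightarrow> i \<le> N \<Longrightarrow> X i = (-1) * X (i - 1)"
        by (fastforce simp: add_eq_0_iff2)
      have "X (-1) = 0" using X unfolding vanishes_outside_def by simp
      from vanishes_of_recurrence[of X, OF this rec] i0 show False by auto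
    qed
    then show ?thesis unfolding form by (simp add: c)
  qed
qed

lemma toeplitz_form_second_diff:
  assumes X: "vanishes_outside (N - 1) X" and N: "0 \<le> N"
  shows "toeplitz_form (\<lambda>k. B (k + 1) - 2 * B k + B (k - 1)) N X
       = - toeplitz_form B N (\<lambda>i. X i - X (i - 1))"
proof -
  have X0: "X (-1) = 0" "X N = 0" using X unfolding vanishes_outside_def by auto
  define T1 where "T1 = (\<Sum>i\<in>{0..N}. \<Sum>j\<in>{0..N}. B (i - j) * X i * X j)"
  define T2 where "T2 = (\<Sum>i\<in>{0..N}. \<Sum>j\<in>{0..N}. B (i - j) * X i * X (j - 1))"
  define T3 where "T3 = (\<Sum>i\<in>{0..N}. \<Sum>j\<in>{0..N}. B (i - j) * X (i - 1) * X j)"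
  define T4 where "T4 = (\<Sum>i\<in>{0..N}. \<Sum>j\<in>{0..N}. B (i - j) * X (i - 1) * X (j - 1))"
  have expand: "toeplitz_form B N (\<lambda>i. X i - X (i - 1)) = T1 - T2 - T3 + T4"
  proof -
    have "B (i - j) * (X i - X (i - 1)) * (X j - X (j - 1)) = B (i - j) * X i * X j
      - B (i - j) * X i * X (j - 1) - B (i - j) * X (i - 1) * X j
      + B (i - j) * X (i - 1) * X (j - 1)" for i j
      by (simp add: algebra_simps)
    then show ?thesis unfolding toeplitz_form_def T1_def T2_def T3_def T4_def
      by (simp only: sum.distrib sum_subtractf)
  qed
  have shift_j: "(\<Sum>j\<in>{0..N}. B (i - j) * Y * X (j - 1)) = (\<Sum>j\<in>{0..N}. B (i - 1 - j) * Y * X j)"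
    for i Y
    using sum_shift_by_one[where g = "\<lambda>j. B (i - 1 - j) * Y * X j", OF _ _ N] X0
    by (simp add: algebra_simps)
  have shift_i: "(\<Sum>i\<in>{0..N}. F (i - 1)) = (\<Sum>i\<in>{0..N}. F i)"
    if "\<And>i. F i = (\<Sum>j\<in>{0..N}. B (i + d - j) * X i * X j)" for F d
    using sum_shift_by_one[where g = F, OF _ _ N] X0 by (simp add: that)
  have T2: "T2 = toeplitz_form (\<lambda>k. B (k - 1)) N X"
    unfolding T2_def toeplitz_form_def shift_j by (simp add: algebra_simps)
  have T3: "T3 = toeplitz_form (\<lambda>k. B (k + 1)) N X"
    using shift_i[of "\<lambda>i. \<Sum>j\<in>{0..N}. B (i + 1 - j) * X i * X j" 1]
    unfolding T3_def toeplitz_form_def by (simp add: algebra_simps)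
  have T4: "T4 = T1"
    using shift_i[of "\<lambda>i. \<Sum>j\<in>{0..N}. B (i + 0 - j) * X i * X j" 0]
    unfolding T4_def T1_def shift_j by (simp add: algebra_simps)
  have "toeplitz_form (\<lambda>k. B (k + 1) - 2 * B k + B (k - 1)) N X
      = toeplitz_form (\<lambda>k. B (k + 1)) N X - 2 * T1 + toeplitz_form (\<lambda>k. B (k - 1)) N X"
    unfolding toeplitz_form_def T1_def
    by (simp add: sum.distrib sum_subtractf sum_distrib_left algebra_simps)
  then show ?thesis unfolding expand T2 T3 T4 by simp
qed

definition tent :: "nat \<Rightarrow> int \<Rightarrow> real" where
  "tent m k = real (Suc m - nat \<bar>k\<bar>)"

definition second_diff :: "(nat \<Rightarrow> real) \<Rightarrow> nat \<Rightarrow> real" where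
  "second_diff H m = H m - 2 * H (Suc m) + H (Suc (Suc m))"

lemma card_common_windows:
  fixes i j N :: int
  assumes "i \<in> {0..N}" "j \<in> {0..N}"
  shows "(\<Sum>l\<in>{- int m..N}. (if l \<le> i \<and> i \<le> l + int m then 1 else 0)
           * (if l \<le> j \<and> j \<le> l + int m then 1 else 0)) = tent m (i - j)"
proof -
  have "(\<Sum>l\<in>{- int m..N}. (if l \<le> i \<and> i \<le> l + int m then 1 else 0)
          * (if l \<le> j \<and> j \<le> l + int m then (1::real) else 0))
      = (\<Sum>l\<in>{- int m..N}. if l \<le> i \<and> i \<le> l + int m \<and> l \<le> j \<and> j \<le> l + int m then 1 else 0)"
    by (intro sum.cong refl) auto
  also have "\<dots> = real (card {l\<in>{- int m..N}. l \<le> i \<and> i \<le> l + int m \<and> l \<le> j \<and> j \<le> l + int m})"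
    by (simp add: sum.inter_filter[symmetric])
  also have "{l\<in>{- int m..N}. l \<le> i \<and> i \<le> l + int m \<and> l \<le> j \<and> j \<le> l + int m}
      = {max i j - int m .. min i j}"
    using assms by auto
  also have "real (card {max i j - int m .. min i j}) = tent m (i - j)"
    unfolding tent_def card_atLeastAtMost_int by (cases "i \<le> j") (auto simp: nat_diff_distrib')
  finally show ?thesis .
qed

lemma toeplitz_form_tent:
  "toeplitz_form (tent m) N Y
     = (\<Sum>l\<in>{- int m..N}. (\<Sum>i\<in>{0..N}. (if l \<le> i \<and> i \<le> l + int m then 1 else 0) * Y i)\<^sup>2)"
proof -
  let ?I = "\<lambda>l i. if l \<le> i \<and> i \<le> l + int m then (1::real) else 0"
  have "(\<Sum>l\<in>{- int m..N}. (\<Sum>i\<in>{0..N}. ?I l i * Y i)\<^sup>2)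
      = (\<Sum>l\<in>{- int m..N}. \<Sum>i\<in>{0..N}. \<Sum>j\<in>{0..N}. (?I l i * ?I l j) * Y i * Y j)"
    by (simp add: power2_eq_square sum_product mult.commute mult.left_commute)
  also have "\<dots> = (\<Sum>i\<in>{0..N}. \<Sum>j\<in>{0..N}. \<Sum>l\<in>{- int m..N}. (?I l i * ?I l j) * Y i * Y j)"
    by (subst sum.swap) (subst (2) sum.swap, rule refl)
  also have "\<dots> = (\<Sum>i\<in>{0..N}. \<Sum>j\<in>{0..N}. tent m (i - j) * Y i * Y j)"
    using card_common_windows[of _ N _ m] by (intro sum.cong refl) (simp add: sum_distrib_right[symmetric])
  finally show ?thesis unfolding toeplitz_form_def by simp
qed

lemma toeplitz_form_tent_nonneg: "0 \<le> toeplitz_form (tent m) N Y"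
  unfolding toeplitz_form_tent by (intro sum_nonneg) simp

lemma toeplitz_form_const_nonneg: "0 \<le> toeplitz_form (\<lambda>k. 1) N Y"
proof -
  have "toeplitz_form (\<lambda>k. 1) N Y = (\<Sum>i\<in>{0..N}. Y i) * (\<Sum>i\<in>{0..N}. Y i)"
    unfolding toeplitz_form_def by (simp add: sum_product)
  then show ?thesis by simp
qed

lemma toeplitz_form_tent_0:
  assumes "vanishes_outside N Y"
  shows "toeplitz_form (tent 0) N Y = (\<Sum>i\<in>{0..N}. Y i * Y i)"
proof -
  have "tent 0 = kdelta 0" by (auto simp: tent_def kdelta_def fun_eq_iff)
  then show ?thesis using toeplitz_form_kdelta[OF assms, of 0] by simp
qed

lemma toeplitz_form_tent_1_le:
  assumes Y: "vanishes_outside (N - 1) Y" and N: "0 \<le> N"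
  shows "toeplitz_form (tent 1) N Y \<le> 4 * (\<Sum>i\<in>{0..N}. Y i * Y i)"
proof -
  have "tent 1 = (\<lambda>k. 2 * kdelta 0 k + 1 * (kdelta 1 k + kdelta (-1) k))"
    by (auto simp: tent_def kdelta_def fun_eq_iff)
  then have "toeplitz_form (tent 1) N Y
      = 2 * (\<Sum>i\<in>{0..N}. Y i * Y i) + 2 * (\<Sum>i\<in>{0..N}. Y i * Y (i - 1))"
    using toeplitz_form_three_point[OF vanishes_outside_mono[OF Y], of N 2 1] by simp
  moreover have "0 \<le> (\<Sum>i\<in>{0..N}. (Y i + (-1) * Y (i - 1))\<^sup>2)" by (intro sum_nonneg) simp
  ultimately show ?thesis unfolding sum_square_shift[OF Y N] by simp
qed

text \<open>Since \<open>tent m k = Suc m - |k|\<close>, this expands \<open>H\<close> in tents weighted by its second differences.\<close>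
lemma tent_decomposition:
  "d \<le> L \<Longrightarrow> H d = H (Suc L) + real (Suc L - d) * (H L - H (Suc L))
     + (\<Sum>m<L. second_diff H m * real (Suc m - d))"
proof (induction L)
  case 0 then show ?case by simp
next
  case (Suc L)
  show ?case
  proof (cases "d = Suc L")
    case True
    then have "(\<Sum>m<Suc L. second_diff H m * real (Suc m - d)) = 0" by (intro sum.neutral) auto
    then show ?thesis using True by simp
  next
    case False
    then have dL: "d \<le> L" using Suc.prems by simp
    have "real (Suc L - d) = real L + 1 - real d" "real (Suc (Suc L) - d) = real L + 2 - real d"
      using dL by (simp_all add: of_nat_diff)
    then show ?thesis
      unfolding sum.lessThan_Suc Suc.IH[OF dL] second_diff_def by (simp add: algebra_simps)
  qed
qed

lemma toeplitz_form_convex_lower_bound: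
  fixes H :: "nat \<Rightarrow> real" and N :: int
  assumes Y: "vanishes_outside (N - 1) Y" and N: "2 \<le> N"
    and nonneg: "0 \<le> H (Suc (nat N))" and decr: "H (Suc (nat N)) \<le> H (nat N)"
    and convex: "\<And>m. 2 \<le> m \<Longrightarrow> 0 \<le> second_diff H m"
  shows "(second_diff H 0 + 4 * min (second_diff H 1) 0) * (\<Sum>i\<in>{0..N}. Y i * Y i)
      \<le> toeplitz_form (\<lambda>k. H (nat \<bar>k\<bar>)) N Y"
proof -
  define L where "L = nat N"
  define S where "S = (\<Sum>i\<in>{0..N}. Y i * Y i)"
  define q where "q = (\<lambda>m. second_diff H m * toeplitz_form (tent m) N Y)"
  have "toeplitz_form (\<lambda>k. H (nat \<bar>k\<bar>)) N Y = toeplitz_form (\<lambda>k.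
      1 * (\<Sum>m<L. second_diff H m * tent m k)
      + 1 * (H (Suc L) * 1 + (H L - H (Suc L)) * tent L k)) N Y"
  proof (rule toeplitz_form_cong)
    fix k :: int assume "\<bar>k\<bar> \<le> N"
    then have "nat \<bar>k\<bar> \<le> L" unfolding L_def by simp
    from tent_decomposition[OF this, of H] show "H (nat \<bar>k\<bar>) = 1 * (\<Sum>m<L. second_diff H m * tent m k)
        + 1 * (H (Suc L) * 1 + (H L - H (Suc L)) * tent L k)"
      unfolding tent_def by (simp add: algebra_simps)
  qed
  also have "\<dots> = (\<Sum>m<L. q m) + (H (Suc L) * toeplitz_form (\<lambda>k. 1) N Y
      + (H L - H (Suc L)) * toeplitz_form (tent L) N Y)"
    unfolding toeplitz_form_linear q_def by (simp add: toeplitz_form_sum)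
  finally have E: "toeplitz_form (\<lambda>k. H (nat \<bar>k\<bar>)) N Y = (\<Sum>m<L. q m) + (H (Suc L)
      * toeplitz_form (\<lambda>k. 1) N Y + (H L - H (Suc L)) * toeplitz_form (tent L) N Y)" .
  have "0 \<le> H (Suc L) * toeplitz_form (\<lambda>k. 1) N Y + (H L - H (Suc L)) * toeplitz_form (tent L) N Y"
    using nonneg decr toeplitz_form_const_nonneg toeplitz_form_tent_nonneg unfolding L_def by simp
  moreover have "(\<Sum>m<L. q m) = q 0 + q 1 + (\<Sum>m\<in>{2..<L}. q m)"
  proof -
    have "{..<L} = {0, 1} \<union> {2..<L}" using N unfolding L_def by auto
    then show ?thesis by (simp add: sum.union_disjoint)
  qed
  moreover have "0 \<le> (\<Sum>m\<in>{2..<L}. q m)"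
    unfolding q_def using convex toeplitz_form_tent_nonneg by (intro sum_nonneg) simp
  moreover have "q 0 = second_diff H 0 * S"
    unfolding q_def S_def using toeplitz_form_tent_0 vanishes_outside_mono[OF Y] by simp
  moreover have "4 * min (second_diff H 1) 0 * S \<le> q 1"
  proof (cases "0 \<le> second_diff H 1")
    case True
    then show ?thesis unfolding q_def using toeplitz_form_tent_nonneg[of 1 N Y] by simp
  next
    case False
    then have "second_diff H 1 * (4 * S) \<le> q 1"
      unfolding q_def S_def using toeplitz_form_tent_1_le[OF Y] N by (intro mult_left_mono_neg) auto
    then show ?thesis using False by simp
  qed
  ultimately show ?thesis unfolding E S_def[symmetric] by (simp add: algebra_simps)
qed

section \<open>Gruenwald coefficients and the kernel of \<open>A\<^sub>\<gamma>\<close>\<close>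

definition gcoef_int :: "real \<Rightarrow> int \<Rightarrow> real" where
  "gcoef_int a k = (if k < 0 then 0 else gcoef a (nat k))"

text \<open>Both weight families of the schemes are \<open>w\<^sub>k = shift_comb s \<gamma> g (k)\<close> with the
  Gruenwald coefficients \<open>g\<close> extended by zero to negative indices (\<open>gcoef_int\<close>).\<close>
definition shift_comb :: "shift \<Rightarrow> real \<Rightarrow> (int \<Rightarrow> real) \<Rightarrow> int \<Rightarrow> real" where
  "shift_comb s \<gamma> F k = (case s of
      PQ_1_0 \<Rightarrow> \<gamma> / 2 * F k + (2 - \<gamma>) / 2 * F (k - 1)
    | PQ_1_m1 \<Rightarrow> (2 + \<gamma>) / 4 * F k + (2 - \<gamma>) / 4 * F (k - 2))"

definition bcoef :: "shift \<Rightarrow> real \<Rightarrow> int \<Rightarrow> real" where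
  "bcoef s \<gamma> = shift_comb s \<gamma> (gcoef_int (\<gamma> - 2))"

definition bcoef_even :: "shift \<Rightarrow> real \<Rightarrow> nat \<Rightarrow> real" where
  "bcoef_even s \<gamma> d = (bcoef s \<gamma> (int d) + bcoef s \<gamma> (- int d)) / 2"

lemma gcoef_Suc: "(real k + 1) * gcoef a (Suc k) = (real k - a) * gcoef a k"
proof -
  have "(real k + 1) * (a gchoose Suc k) = (a - real k) * (a gchoose k)"
    using gbinomial_mult_1[of a k] by (simp add: algebra_simps)
  then have "(-1) ^ k * ((real k + 1) * (a gchoose Suc k)) = (-1) ^ k * ((a - real k) * (a gchoose k))"
    by simp
  then show ?thesis unfolding gcoef_def by (simp add: algebra_simps)
qed

lemma gcoef_int_add_one: "gcoef_int (a + 1) k = gcoef_int a k - gcoef_int a (k - 1)"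
proof (cases "0 < k")
  case True
  then obtain j where j: "k = int (Suc j)" by (metis pos_int_cases gr0_implies_Suc)
  have "gcoef (a + 1) (Suc j) = gcoef a (Suc j) - gcoef a j"
    unfolding gcoef_def gbinomial_Suc_Suc by (simp add: distrib_left)
  moreover have "nat k = Suc j" "nat (k - 1) = j" using j by auto
  ultimately show ?thesis using True unfolding gcoef_int_def by simp
qed (auto simp: gcoef_int_def gcoef_def)

lemma gcoef_int_second_diff:
  "gcoef_int \<gamma> k = gcoef_int (\<gamma> - 2) k - 2 * gcoef_int (\<gamma> - 2) (k - 1) + gcoef_int (\<gamma> - 2) (k - 2)"
  using gcoef_int_add_one[of "\<gamma> - 1" k] gcoef_int_add_one[of "\<gamma> - 2" k]
    gcoef_int_add_one[of "\<gamma> - 2" "k - 1"]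
  by (simp add: algebra_simps)

lemma Amat_entry:
  assumes "i < m - 1" "j < m - 1"
  shows "Amat s \<gamma> m $$ (i, j) = shift_comb s \<gamma> (gcoef_int \<gamma>) (int i - int j + 1)"
proof -
  have "j \<le> i + 1 \<Longrightarrow> nat (int i - int j + 1) = i + 1 - j" by arith
  moreover have "j \<le> i + 1 \<Longrightarrow> nat (int i - int j + 1) - 1 = i - j" by arith
  moreover have "j \<le> i + 1 \<Longrightarrow> nat (int i - int j + 1) - 2 = i - j - 1" by arith
  ultimately show ?thesis
    using assms unfolding Amat_def wcoef_def shift_comb_def gcoef_int_def
    by (cases s) (auto simp: nat_diff_distrib')
qed

lemma shift_comb_gcoef_eq_second_diff:
  "shift_comb s \<gamma> (gcoef_int \<gamma>) (k + 1) = bcoef s \<gamma> (k + 1) - 2 * bcoef s \<gamma> k + bcoef s \<gamma> (k - 1)"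
  unfolding bcoef_def shift_comb_def gcoef_int_second_diff[of \<gamma>]
  by (cases s) (simp_all add: algebra_simps)

lemma bcoef_neg: "k < 0 \<Longrightarrow> bcoef s \<gamma> k = 0"
  by (cases s) (auto simp: bcoef_def shift_comb_def gcoef_int_def)

context
  fixes a :: real
  assumes a: "-1 \<le> a" "a \<le> 0"
begin

lemma gcoef_nonneg: "0 \<le> gcoef a k"
proof (induction k)
  case 0 then show ?case by (simp add: gcoef_def)
next
  case (Suc k)
  then have "0 \<le> (real k + 1) * gcoef a (Suc k)" unfolding gcoef_Suc using a by simp
  then show ?case by (simp add: zero_le_mult_iff)
qed

lemma gcoef_Suc_le: "gcoef a (Suc k) \<le> gcoef a k"
proof -
  have "(real k + 1) * gcoef a (Suc k) \<le> (real k + 1) * gcoef a k"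
    unfolding gcoef_Suc using a gcoef_nonneg[of k] by (intro mult_right_mono) auto
  then show ?thesis by (simp add: mult_le_cancel_left_pos)
qed

lemma gcoef_convex: "0 \<le> gcoef a k - 2 * gcoef a (Suc k) + gcoef a (Suc (Suc k))"
proof -
  define r where "r = real k"
  have e1: "(r + 1) * gcoef a (Suc k) = (r - a) * gcoef a k"
    unfolding r_def by (rule gcoef_Suc)
  have e2: "(r + 2) * gcoef a (Suc (Suc k)) = (r + 1 - a) * gcoef a (Suc k)"
    using gcoef_Suc[of "Suc k" a] unfolding r_def by (simp add: algebra_simps)
  have "(r + 1) * (r + 2) * (gcoef a k - 2 * gcoef a (Suc k) + gcoef a (Suc (Suc k)))
      = (r + 1) * (r + 2) * gcoef a k - 2 * (r + 2) * ((r + 1) * gcoef a (Suc k))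
        + (r + 1) * ((r + 2) * gcoef a (Suc (Suc k)))"
    by (simp add: algebra_simps)
  also have "\<dots> = (1 + a) * (2 + a) * gcoef a k"
    unfolding e2 mult.left_commute[of "r + 1" "r + 1 - a"] e1 by (simp add: algebra_simps)
  finally have "0 \<le> (r + 1) * (r + 2) * (gcoef a k - 2 * gcoef a (Suc k) + gcoef a (Suc (Suc k)))"
    using a gcoef_nonneg[of k] by simp
  moreover have "0 < (r + 1) * (r + 2)" unfolding r_def by simp
  ultimately show ?thesis by (simp add: zero_le_mult_iff)
qed

lemma gcoef_int_nonneg: "0 \<le> gcoef_int a k"
  by (simp add: gcoef_int_def gcoef_nonneg)

lemma gcoef_int_decr: "0 \<le> k \<Longrightarrow> gcoef_int a (k + 1) \<le> gcoef_int a k"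
  using gcoef_Suc_le[of "nat k"] by (simp add: gcoef_int_def nat_add_distrib)

lemma gcoef_int_convex: "0 \<le> k \<Longrightarrow> 0 \<le> gcoef_int a k - 2 * gcoef_int a (k + 1) + gcoef_int a (k + 2)"
  using gcoef_convex[of "nat k"] by (simp add: gcoef_int_def nat_add_distrib)

end

definition amat_margin :: "shift \<Rightarrow> real \<Rightarrow> real" where
  "amat_margin s \<gamma> = second_diff (bcoef_even s \<gamma>) 0 + 4 * min (second_diff (bcoef_even s \<gamma>) 1) 0"

context
  fixes \<gamma> :: real
  assumes \<gamma>: "1 \<le> \<gamma>" "\<gamma> \<le> 2"
begin

lemma bcoef_nonneg: "0 \<le> bcoef s \<gamma> k"
  using gcoef_int_nonneg[of "\<gamma> - 2"] \<gamma>
  by (cases s) (auto simp: bcoef_def shift_comb_def intro!: add_nonneg_nonneg mult_nonneg_nonneg)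

lemma bcoef_decr: "2 \<le> k \<Longrightarrow> bcoef s \<gamma> (k + 1) \<le> bcoef s \<gamma> k"
  using gcoef_int_decr[of "\<gamma> - 2" k] gcoef_int_decr[of "\<gamma> - 2" "k - 1"]
    gcoef_int_decr[of "\<gamma> - 2" "k - 2"] \<gamma>
  by (cases s) (auto simp: bcoef_def shift_comb_def intro!: add_mono mult_left_mono)

lemma bcoef_convex:
  assumes "2 \<le> k \<or> (s = PQ_1_0 \<and> 1 \<le> k)"
  shows "0 \<le> bcoef s \<gamma> k - 2 * bcoef s \<gamma> (k + 1) + bcoef s \<gamma> (k + 2)"
proof -
  define \<Delta> where "\<Delta> j = gcoef_int (\<gamma> - 2) j - 2 * gcoef_int (\<gamma> - 2) (j + 1) + gcoef_int (\<gamma> - 2) (j + 2)"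
    for j
  have \<Delta>: "0 \<le> j \<Longrightarrow> 0 \<le> \<Delta> j" for j
    unfolding \<Delta>_def using gcoef_int_convex[of "\<gamma> - 2" j] \<gamma> by simp
  show ?thesis
  proof (cases s)
    case PQ_1_0
    then have "bcoef s \<gamma> k - 2 * bcoef s \<gamma> (k + 1) + bcoef s \<gamma> (k + 2)
        = \<gamma> / 2 * \<Delta> k + (2 - \<gamma>) / 2 * \<Delta> (k - 1)"
      unfolding bcoef_def shift_comb_def \<Delta>_def by (simp add: algebra_simps)
    moreover have "0 \<le> \<gamma> / 2 * \<Delta> k + (2 - \<gamma>) / 2 * \<Delta> (k - 1)"
      using PQ_1_0 assms \<Delta>[of k] \<Delta>[of "k - 1"] \<gamma> by (intro add_nonneg_nonneg mult_nonneg_nonneg) auto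
    ultimately show ?thesis by simp
  next
    case PQ_1_m1
    then have "bcoef s \<gamma> k - 2 * bcoef s \<gamma> (k + 1) + bcoef s \<gamma> (k + 2)
        = (2 + \<gamma>) / 4 * \<Delta> k + (2 - \<gamma>) / 4 * \<Delta> (k - 2)"
      unfolding bcoef_def shift_comb_def \<Delta>_def by (simp add: algebra_simps)
    moreover have "0 \<le> (2 + \<gamma>) / 4 * \<Delta> k + (2 - \<gamma>) / 4 * \<Delta> (k - 2)"
      using PQ_1_m1 assms \<Delta>[of k] \<Delta>[of "k - 2"] \<gamma> by (intro add_nonneg_nonneg mult_nonneg_nonneg) auto
    ultimately show ?thesis by simp
  qed
qed

lemma bcoef_even_form_lower_bound:
  assumes Y: "vanishes_outside (N - 1) Y" and N: "2 \<le> N"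
  shows "amat_margin s \<gamma> * (\<Sum>i\<in>{0..N}. Y i * Y i) \<le> toeplitz_form (\<lambda>k. bcoef_even s \<gamma> (nat \<bar>k\<bar>)) N Y"
  unfolding amat_margin_def
proof (rule toeplitz_form_convex_lower_bound[OF Y N])
  show "0 \<le> bcoef_even s \<gamma> (Suc (nat N))"
    unfolding bcoef_even_def using bcoef_nonneg by (simp add: add_nonneg_nonneg)
  show "bcoef_even s \<gamma> (Suc (nat N)) \<le> bcoef_even s \<gamma> (nat N)"
    unfolding bcoef_even_def using bcoef_decr[of N s] N by (simp add: bcoef_neg add.commute)
  show "0 \<le> second_diff (bcoef_even s \<gamma>) m" if "2 \<le> m" for m
    unfolding second_diff_def bcoef_even_def using bcoef_convex[of "int m" s] that
    by (simp add: bcoef_neg add_ac)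
qed

end

lemma quad_form_Amat:
  fixes x :: "nat \<Rightarrow> real" and m :: nat
  defines "X \<equiv> zero_ext (m - 1) x" and "N \<equiv> int (m - 1) + 2"
  shows "quad_form (Amat s \<gamma> m) (m - 1) x
       = - toeplitz_form (\<lambda>k. bcoef_even s \<gamma> (nat \<bar>k\<bar>)) N (\<lambda>i. X i - X (i - 1))"
proof -
  have X: "vanishes_outside (N - 1) X"
    unfolding X_def by (rule vanishes_outside_mono[OF vanishes_outside_zero_ext]) (simp add: N_def)
  have "quad_form (Amat s \<gamma> m) (m - 1) x
      = toeplitz_form (\<lambda>k. bcoef s \<gamma> (k + 1) - 2 * bcoef s \<gamma> k + bcoef s \<gamma> (k - 1)) N X"
    unfolding X_def shift_comb_gcoef_eq_second_diff[symmetric]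
    by (rule quad_form_eq_toeplitz_form) (use Amat_entry in \<open>auto simp: N_def\<close>)
  also have "\<dots> = - toeplitz_form (bcoef s \<gamma>) N (\<lambda>i. X i - X (i - 1))"
    by (rule toeplitz_form_second_diff[OF X]) (simp add: N_def)
  also have "toeplitz_form (bcoef s \<gamma>) N (\<lambda>i. X i - X (i - 1))
      = toeplitz_form (\<lambda>k. bcoef_even s \<gamma> (nat \<bar>k\<bar>)) N (\<lambda>i. X i - X (i - 1))"
    unfolding toeplitz_form_symmetrize[of "bcoef s \<gamma>"] bcoef_even_def
    by (intro toeplitz_form_cong) (auto simp: abs_if add.commute)
  finally show ?thesis .
qed

lemma Amat_neg_def:
  assumes \<gamma>: "1 \<le> \<gamma>" "\<gamma> \<le> 2" and margin: "0 < amat_margin s \<gamma>"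
  shows "neg_def_form (Amat s \<gamma> m) (m - 1)"
  unfolding neg_def_form_def
proof (intro allI impI)
  fix x :: "nat \<Rightarrow> real" assume x: "\<exists>i<m - 1. x i \<noteq> 0"
  define N where "N = int (m - 1) + 2"
  define X where "X = zero_ext (m - 1) x"
  define Y where "Y = (\<lambda>i. X i - X (i - 1))"
  have X: "vanishes_outside (N - 1) X"
    unfolding X_def by (rule vanishes_outside_mono[OF vanishes_outside_zero_ext]) (simp add: N_def)
  have Y: "vanishes_outside (N - 1) Y"
    unfolding Y_def X_def vanishes_outside_def zero_ext_def N_def by auto
  have "\<exists>i\<in>{0..N}. Y i \<noteq> 0"
  proof (rule ccontr)
    assume "\<not> ?thesis"
    then have rec: "\<And>i. 0 \<le> i \<Longrightarrow> i \<le> N \<Longrightarrow> X i = 1 * X (i - 1)" unfolding Y_def by auto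
    have "X (-1) = 0" using X unfolding vanishes_outside_def by simp
    then have "\<And>i. 0 \<le> i \<Longrightarrow> i \<le> N \<Longrightarrow> X i = 0" using vanishes_of_recurrence[of X, OF _ rec] by blast
    then show False using zero_ext_nonzero[OF x, of N] unfolding X_def N_def by auto
  qed
  then obtain i0 where "i0 \<in> {0..N}" "Y i0 \<noteq> 0" by blast
  moreover from this have "0 < Y i0 * Y i0" using not_real_square_gt_zero by blast
  ultimately have "0 < (\<Sum>i\<in>{0..N}. Y i * Y i)" by (intro sum_pos2[of _ i0]) auto
  with margin have "0 < amat_margin s \<gamma> * (\<Sum>i\<in>{0..N}. Y i * Y i)" by simp
  also have "\<dots> \<le> toeplitz_form (\<lambda>k. bcoef_even s \<gamma> (nat \<bar>k\<bar>)) N Y"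
    by (rule bcoef_even_form_lower_bound[OF \<gamma> Y]) (simp add: N_def)
  finally show "quad_form (Amat s \<gamma> m) (m - 1) x < 0"
    unfolding quad_form_Amat N_def[symmetric] X_def[symmetric] Y_def[symmetric] by simp
qed

lemma Cmat_entry:
  assumes "i < m - 1" "j < m - 1"
  shows "Cmat s \<gamma> m $$ (i, j) = (1 - 2 * ccoef s \<gamma>) * kdelta 0 (int i - int j)
           + ccoef s \<gamma> * (kdelta 1 (int i - int j) + kdelta (-1) (int i - int j))"
  using assms unfolding Cmat_def tridiag_def kdelta_def by auto

lemma Cmat_symmetric: "i < m - 1 \<Longrightarrow> j < m - 1 \<Longrightarrow> Cmat s \<gamma> m $$ (i, j) = Cmat s \<gamma> m $$ (j, i)"
  unfolding Cmat_def tridiag_def by auto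

lemma Cmat_pos_def:
  assumes c: "0 \<le> ccoef s \<gamma>" "ccoef s \<gamma> \<le> 1/4"
  shows "pos_def_form (Cmat s \<gamma> m) (m - 1)"
  unfolding pos_def_form_def
proof (intro allI impI)
  fix x :: "nat \<Rightarrow> real" assume x: "\<exists>i<m - 1. x i \<noteq> 0"
  define n where "n = m - 1"
  define N where "N = int n + 2"
  have N: "int n \<le> N" "0 \<le> N" unfolding N_def by auto
  have X: "vanishes_outside (N - 1) (zero_ext n x)"
    by (rule vanishes_outside_mono[OF vanishes_outside_zero_ext]) (simp add: N_def)
  have "quad_form (Cmat s \<gamma> m) n x = toeplitz_form (\<lambda>k. (1 - 2 * ccoef s \<gamma>) * kdelta 0 k
      + ccoef s \<gamma> * (kdelta 1 k + kdelta (-1) k)) N (zero_ext n x)"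
    unfolding n_def by (rule quad_form_eq_toeplitz_form) (use Cmat_entry N in \<open>auto simp: n_def\<close>)
  also have "0 < \<dots>"
    using toeplitz_form_tridiag_pos[OF X N(2) c] zero_ext_nonzero[of n x N] x N unfolding n_def
    by blast
  finally show "0 < quad_form (Cmat s \<gamma> m) (m - 1) x" unfolding n_def .
qed

section \<open>Kronecker products and the two-dimensional scheme\<close>

lemma dim_kron [simp]:
  "dim_row (kron A B) = dim_row A * dim_row B" "dim_col (kron A B) = dim_col A * dim_col B"
  unfolding kron_def by simp_all

lemma index_kron:
  "i < dim_row A * dim_row B \<Longrightarrow> j < dim_col A * dim_col B \<Longrightarrow>
   kron A B $$ (i, j) = A $$ (i div dim_row B, j div dim_col B) * B $$ (i mod dim_row B, j mod dim_col B)"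
  unfolding kron_def by simp

lemma div_mod_less_of_less_mult:
  fixes i a b :: nat
  assumes "i < a * b"
  shows "i div b < a" "i mod b < b"
proof -
  have "0 < b" using assms by (cases b) auto
  then show "i div b < a" "i mod b < b" using assms by (auto simp: less_mult_imp_div_less)
qed

lemma sum_lessThan_mult_div_mod:
  fixes f :: "nat \<Rightarrow> nat \<Rightarrow> real"
  shows "(\<Sum>k<a * b. f (k div b) (k mod b)) = (\<Sum>p<a. \<Sum>q<b. f p q)"
proof -
  have "(\<Sum>k<a * b. f (k div b) (k mod b)) = (\<Sum>(p, q)\<in>{..<a} \<times> {..<b}. f p q)"
  proof (rule sum.reindex_bij_witness[where i = "\<lambda>(p, q). p * b + q" and j = "\<lambda>k. (k div b, k mod b)"])
    fix pq assume pq: "pq \<in> {..<a} \<times> {..<b}"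
    obtain p q where pq': "pq = (p, q)" by (cases pq)
    with pq have p: "p < a" and q: "q < b" by auto
    show "((\<lambda>(p, q). p * b + q) pq div b, (\<lambda>(p, q). p * b + q) pq mod b) = pq"
      using pq' q by simp
    have "p * b + q < (p + 1) * b" using q by simp
    also have "\<dots> \<le> a * b" using p by (intro mult_le_mono1) simp
    finally show "(\<lambda>(p, q). p * b + q) pq \<in> {..<a * b}" using pq' by simp
  qed (auto simp: div_mod_less_of_less_mult)
  then show ?thesis by (simp add: sum.cartesian_product)
qed

lemma kron_mult:
  assumes A: "A \<in> carrier_mat a a" and C: "C \<in> carrier_mat a a"
    and B: "B \<in> carrier_mat b b" and D: "D \<in> carrier_mat b b"
  shows "kron A B * kron C D = kron (A * C) (B * D)"
proof (rule eq_matI)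
  fix i j assume "i < dim_row (kron (A * C) (B * D))" "j < dim_col (kron (A * C) (B * D))"
  then have ij: "i < a * b" "j < a * b" using A B C D by auto
  note dm = div_mod_less_of_less_mult[OF ij(1)] div_mod_less_of_less_mult[OF ij(2)]
  have "(kron A B * kron C D) $$ (i, j) = (\<Sum>k<a * b. kron A B $$ (i, k) * kron C D $$ (k, j))"
    using A B C D ij by (simp add: scalar_prod_def atLeast0LessThan)
  also have "\<dots> = (\<Sum>k<a * b. (\<lambda>p q. (A $$ (i div b, p) * C $$ (p, j div b))
      * (B $$ (i mod b, q) * D $$ (q, j mod b))) (k div b) (k mod b))"
    using A B C D ij by (intro sum.cong refl) (simp add: index_kron div_mod_less_of_less_mult)
  also have "\<dots> = (\<Sum>p<a. A $$ (i div b, p) * C $$ (p, j div b))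
      * (\<Sum>q<b. B $$ (i mod b, q) * D $$ (q, j mod b))"
    by (subst sum_lessThan_mult_div_mod) (simp add: sum_product)
  also have "\<dots> = kron (A * C) (B * D) $$ (i, j)"
    using A B C D ij dm by (simp add: index_kron scalar_prod_def atLeast0LessThan)
  finally show "(kron A B * kron C D) $$ (i, j) = kron (A * C) (B * D) $$ (i, j)" .
qed (use A B C D in auto)

lemma kron_one: "kron (1\<^sub>m a) (1\<^sub>m b) = 1\<^sub>m (a * b)"
proof (rule eq_matI)
  fix i j assume "i < dim_row (1\<^sub>m (a * b) :: real mat)" "j < dim_col (1\<^sub>m (a * b) :: real mat)"
  then have ij: "i < a * b" "j < a * b" by auto
  have "(i div b = j div b \<and> i mod b = j mod b) = (i = j)" by (metis div_mult_mod_eq)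
  then show "kron (1\<^sub>m a) (1\<^sub>m b) $$ (i, j) = 1\<^sub>m (a * b) $$ (i, j)"
    using ij div_mod_less_of_less_mult[OF ij(1)] div_mod_less_of_less_mult[OF ij(2)]
    by (auto simp: index_kron)
qed auto

lemma kron_pow:
  assumes A: "A \<in> carrier_mat a a" and B: "B \<in> carrier_mat b b"
  shows "kron A B ^\<^sub>m k = kron (A ^\<^sub>m k) (B ^\<^sub>m k)"
proof (induction k)
  case 0 show ?case by (simp add: kron_one)
next
  case (Suc k)
  then show ?case using A B by (simp add: kron_mult[of _ a _ _ b])
qed

lemma kron_smult_left: "c \<cdot>\<^sub>m kron A B = kron (c \<cdot>\<^sub>m A) B"
  by (auto intro!: eq_matI simp: index_kron div_mod_less_of_less_mult)

lemma kron_smult_right: "c \<cdot>\<^sub>m kron A B = kron A (c \<cdot>\<^sub>m B)"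
  by (auto intro!: eq_matI simp: index_kron div_mod_less_of_less_mult)

lemma
  assumes "X \<in> carrier_mat b b" "Y \<in> carrier_mat b b"
  shows kron_add_left: "kron X A + kron Y A = kron (X + Y) A"
    and kron_minus_left: "kron X A - kron Y A = kron (X - Y) A"
    and kron_add_right: "kron A X + kron A Y = kron A (X + Y)"
    and kron_minus_right: "kron A X - kron A Y = kron A (X - Y)"
  using assms by (auto intro!: eq_matI simp: index_kron algebra_simps div_mod_less_of_less_mult)

lemma invertible_mat_one: "invertible_mat (1\<^sub>m n :: real mat)"
  by (rule invertible_mat_of_inverse[of _ n "1\<^sub>m n"]) auto

lemma matinv_one: "matinv (1\<^sub>m n) = (1\<^sub>m n :: real mat)"
  by (rule matinv_unique) auto

lemma matinv_kron:
  assumes A: "A \<in> carrier_mat a a" "invertible_mat A" and B: "B \<in> carrier_mat b b" "invertible_mat B"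
  shows "invertible_mat (kron A B)" "matinv (kron A B) = kron (matinv A) (matinv B)"
proof -
  note Ai = matinv_inverse[OF A] and Bi = matinv_inverse[OF B]
  have "kron A B * kron (matinv A) (matinv B) = 1\<^sub>m (a * b)"
    "kron (matinv A) (matinv B) * kron A B = 1\<^sub>m (a * b)"
    using A B Ai Bi by (simp_all add: kron_mult[of _ a _ _ b] kron_one)
  moreover have "kron A B \<in> carrier_mat (a * b) (a * b)"
    "kron (matinv A) (matinv B) \<in> carrier_mat (a * b) (a * b)" using A B Ai Bi by auto
  ultimately show "invertible_mat (kron A B)" "matinv (kron A B) = kron (matinv A) (matinv B)"
    by (auto intro: invertible_mat_of_inverse matinv_unique)
qed

lemma kron_power_tendsto_zero:
  assumes A: "A \<in> carrier_mat a a" and B: "B \<in> carrier_mat b b"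
    and limA: "\<And>i j. i < a \<Longrightarrow> j < a \<Longrightarrow> (\<lambda>k. (A ^\<^sub>m k) $$ (i, j)) \<longlonglongrightarrow> 0"
    and limB: "\<And>i j. i < b \<Longrightarrow> j < b \<Longrightarrow> (\<lambda>k. (B ^\<^sub>m k) $$ (i, j)) \<longlonglongrightarrow> 0"
    and ij: "i < a * b" "j < a * b"
  shows "(\<lambda>k. (kron A B ^\<^sub>m k) $$ (i, j)) \<longlonglongrightarrow> 0"
proof -
  note dm = div_mod_less_of_less_mult[OF ij(1)] div_mod_less_of_less_mult[OF ij(2)]
  have "(kron A B ^\<^sub>m k) $$ (i, j) = (A ^\<^sub>m k) $$ (i div b, j div b) * (B ^\<^sub>m k) $$ (i mod b, j mod b)"
    for k unfolding kron_pow[OF A B] using ij A B by (simp add: index_kron)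
  moreover have "(\<lambda>k. (A ^\<^sub>m k) $$ (i div b, j div b) * (B ^\<^sub>m k) $$ (i mod b, j mod b)) \<longlonglongrightarrow> 0 * 0"
    using limA limB dm by (intro tendsto_mult) auto
  ultimately show ?thesis by simp
qed

definition admissible :: "shift \<Rightarrow> real \<Rightarrow> bool" where
  "admissible s \<gamma> \<longleftrightarrow> 1 \<le> \<gamma> \<and> \<gamma> \<le> 2 \<and> 0 < amat_margin s \<gamma> \<and> 0 \<le> ccoef s \<gamma> \<and> ccoef s \<gamma> \<le> 1/4"

definition Dmat :: "shift \<Rightarrow> real \<Rightarrow> nat \<Rightarrow> real \<Rightarrow> real \<Rightarrow> real \<Rightarrow> real mat" where
  "Dmat s \<gamma> m k Kl Kr = k \<cdot>\<^sub>m (Kl \<cdot>\<^sub>m Amat s \<gamma> m + Kr \<cdot>\<^sub>m transpose_mat (Amat s \<gamma> m))"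

lemma Amat_carrier: "Amat s \<gamma> m \<in> carrier_mat (m - 1) (m - 1)"
  unfolding Amat_def by simp

lemma Cmat_carrier: "Cmat s \<gamma> m \<in> carrier_mat (m - 1) (m - 1)"
  unfolding Cmat_def tridiag_def by simp

lemma Dmat_carrier: "Dmat s \<gamma> m k Kl Kr \<in> carrier_mat (m - 1) (m - 1)"
  unfolding Dmat_def using Amat_carrier by simp

lemma Dmat_neg_def:
  assumes "1 \<le> \<gamma>" "\<gamma> \<le> 2" "0 < amat_margin s \<gamma>"
    and k: "0 < k" and K: "0 \<le> Kl" "0 \<le> Kr" "Kl\<^sup>2 + Kr\<^sup>2 \<noteq> 0"
  shows "neg_def_form (Dmat s \<gamma> m k Kl Kr) (m - 1)"
proof -
  have "0 < Kl + Kr" using K by (cases "Kl = 0") auto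
  with k have "0 < k * (Kl + Kr)" by simp
  with Amat_neg_def[OF assms(1-3)] show ?thesis
    unfolding neg_def_form_def Dmat_def quad_form_smult_add_transpose[OF Amat_carrier]
    by (auto intro: mult_pos_neg)
qed

lemma one_dim_stable:
  assumes adm: "admissible s \<gamma>" and "0 < k" "0 \<le> Kl" "0 \<le> Kr" "Kl\<^sup>2 + Kr\<^sup>2 \<noteq> 0"
  shows "invertible_mat (Cmat s \<gamma> m - Dmat s \<gamma> m k Kl Kr)"
    and "i < m - 1 \<Longrightarrow> j < m - 1 \<Longrightarrow> (\<lambda>t. ((matinv (Cmat s \<gamma> m - Dmat s \<gamma> m k Kl Kr)
           * (Cmat s \<gamma> m + Dmat s \<gamma> m k Kl Kr)) ^\<^sub>m t) $$ (i, j)) \<longlonglongrightarrow> 0"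
proof -
  have neg: "neg_def_form (Dmat s \<gamma> m k Kl Kr) (m - 1)"
    using adm assms(2-) unfolding admissible_def by (blast intro: Dmat_neg_def)
  have pos: "pos_def_form (Cmat s \<gamma> m) (m - 1)"
    using adm Cmat_pos_def unfolding admissible_def by blast
  note stable = power_tendsto_zero_of_pos_def_neg_def[OF Cmat_carrier Dmat_carrier Cmat_symmetric pos neg]
  show "invertible_mat (Cmat s \<gamma> m - Dmat s \<gamma> m k Kl Kr)" by (rule stable(1))
  show "i < m - 1 \<Longrightarrow> j < m - 1 \<Longrightarrow> (\<lambda>t. ((matinv (Cmat s \<gamma> m - Dmat s \<gamma> m k Kl Kr)
      * (Cmat s \<gamma> m + Dmat s \<gamma> m k Kl Kr)) ^\<^sub>m t) $$ (i, j)) \<longlonglongrightarrow> 0"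
    by (rule stable(2))
qed

lemma CXm_DXm_kron:
  "CXm s \<alpha> Nx Ny - DXm s \<alpha> Nx Ny \<tau> h Kl Kr
     = kron (1\<^sub>m (Ny - 1)) (Cmat s \<alpha> Nx - Dmat s \<alpha> Nx (\<tau> / (2 * h powr \<alpha>)) Kl Kr)"
  "CXm s \<alpha> Nx Ny + DXm s \<alpha> Nx Ny \<tau> h Kl Kr
     = kron (1\<^sub>m (Ny - 1)) (Cmat s \<alpha> Nx + Dmat s \<alpha> Nx (\<tau> / (2 * h powr \<alpha>)) Kl Kr)"
  unfolding CXm_def DXm_def kron_smult_right Dmat_def[symmetric]
  using kron_minus_right[OF Cmat_carrier Dmat_carrier] kron_add_right[OF Cmat_carrier Dmat_carrier]
  by simp_all

lemma CYm_DYm_kron: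
  "CYm s \<beta> Nx Ny - DYm s \<beta> Nx Ny \<tau> h Kl Kr
     = kron (Cmat s \<beta> Ny - Dmat s \<beta> Ny (\<tau> / (2 * h powr \<beta>)) Kl Kr) (1\<^sub>m (Nx - 1))"
  "CYm s \<beta> Nx Ny + DYm s \<beta> Nx Ny \<tau> h Kl Kr
     = kron (Cmat s \<beta> Ny + Dmat s \<beta> Ny (\<tau> / (2 * h powr \<beta>)) Kl Kr) (1\<^sub>m (Nx - 1))"
  unfolding CYm_def DYm_def kron_smult_left Dmat_def[symmetric]
  using kron_minus_left[OF Cmat_carrier Dmat_carrier] kron_add_left[OF Cmat_carrier Dmat_carrier]
  by simp_all

lemma kron_adi_factorization:
  assumes Px: "Px \<in> carrier_mat b b" "invertible_mat Px" and Qx: "Qx \<in> carrier_mat b b"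
    and Py: "Py \<in> carrier_mat a a" "invertible_mat Py" and Qy: "Qy \<in> carrier_mat a a"
  shows "matinv (kron Py (1\<^sub>m b)) * matinv (kron (1\<^sub>m a) Px) * kron (1\<^sub>m a) Qx * kron Qy (1\<^sub>m b)
       = kron (matinv Py * Qy) (matinv Px * Qx)"
proof -
  have Pxi: "matinv Px \<in> carrier_mat b b" and Pyi: "matinv Py \<in> carrier_mat a a"
    using matinv_inverse(1) Px Py by blast+
  show ?thesis
    unfolding matinv_kron(2)[OF Py one_carrier_mat invertible_mat_one]
      matinv_kron(2)[OF one_carrier_mat invertible_mat_one Px] matinv_one
    using Pxi Pyi Qx Qy by (simp add: kron_mult[of _ a _ _ b])
qed

lemma kron_adi_stable:
  assumes Px: "Px \<in> carrier_mat b b" "invertible_mat Px" and Qx: "Qx \<in> carrier_mat b b"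
    and Py: "Py \<in> carrier_mat a a" "invertible_mat Py" and Qy: "Qy \<in> carrier_mat a a"
    and limx: "\<And>i j. i < b \<Longrightarrow> j < b \<Longrightarrow> (\<lambda>t. ((matinv Px * Qx) ^\<^sub>m t) $$ (i, j)) \<longlonglongrightarrow> 0"
    and limy: "\<And>i j. i < a \<Longrightarrow> j < a \<Longrightarrow> (\<lambda>t. ((matinv Py * Qy) ^\<^sub>m t) $$ (i, j)) \<longlonglongrightarrow> 0"
  shows "invertible_mat (kron Py (1\<^sub>m b)) \<and> invertible_mat (kron (1\<^sub>m a) Px) \<and>
    (\<forall>i<b * a. \<forall>j<b * a. (\<lambda>t. ((matinv (kron Py (1\<^sub>m b)) * matinv (kron (1\<^sub>m a) Px)
       * kron (1\<^sub>m a) Qx * kron Qy (1\<^sub>m b)) ^\<^sub>m t) $$ (i, j)) \<longlonglongrightarrow> 0)"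
proof (intro conjI allI impI)
  show "invertible_mat (kron Py (1\<^sub>m b))" "invertible_mat (kron (1\<^sub>m a) Px)"
    using matinv_kron(1)[OF Py one_carrier_mat invertible_mat_one]
      matinv_kron(1)[OF one_carrier_mat invertible_mat_one Px] .
  have R: "matinv Py * Qy \<in> carrier_mat a a" "matinv Px * Qx \<in> carrier_mat b b"
    using matinv_inverse(1)[OF Px] matinv_inverse(1)[OF Py] Qx Qy by auto
  show "(\<lambda>t. ((matinv (kron Py (1\<^sub>m b)) * matinv (kron (1\<^sub>m a) Px)
       * kron (1\<^sub>m a) Qx * kron Qy (1\<^sub>m b)) ^\<^sub>m t) $$ (i, j)) \<longlonglongrightarrow> 0"
    if "i < b * a" "j < b * a" for i j
    unfolding kron_adi_factorization[OF Px Qx Py Qy]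
    by (rule kron_power_tendsto_zero[OF R limy limx]) (use that in \<open>simp_all add: mult.commute\<close>)
qed

lemma uncond_stable_of_admissible:
  assumes "admissible s \<alpha>" and "admissible s \<beta>"
  shows "uncond_stable s \<alpha> \<beta>"
  unfolding uncond_stable_def Let_def CXm_DXm_kron CYm_DYm_kron
  using one_dim_stable[OF assms(1)] one_dim_stable[OF assms(2)]
  by (intro allI impI kron_adi_stable minus_carrier_mat add_carrier_mat Cmat_carrier Dmat_carrier) auto

section \<open>The admissible ranges of \<open>\<alpha>\<close> and \<open>\<beta>\<close>\<close>

lemma gcoef_int_0_to_3:
  "gcoef_int a (-2) = 0" "gcoef_int a (-1) = 0" "gcoef_int a 0 = 1" "gcoef_int a 1 = - a"
  "gcoef_int a 2 = a * (a - 1) / 2" "gcoef_int a 3 = - (a * (a - 1) * (a - 2) / 6)"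
proof -
  have g0: "gcoef a 0 = 1" by (simp add: gcoef_def)
  have g1: "gcoef a 1 = - a" using gcoef_Suc[of 0 a] g0 by simp
  have "2 * gcoef a 2 = (1 - a) * gcoef a 1" using gcoef_Suc[of 1 a] by (simp add: numeral_2_eq_2)
  then have g2: "gcoef a 2 = a * (a - 1) / 2" using g1 by (simp add: algebra_simps)
  have "3 * gcoef a 3 = (2 - a) * gcoef a 2" using gcoef_Suc[of 2 a] by (simp add: numeral_2_eq_2 numeral_3_eq_3)
  then have g3: "gcoef a 3 = - (a * (a - 1) * (a - 2) / 6)" using g2 by (simp add: field_simps)
  show "gcoef_int a (-2) = 0" "gcoef_int a (-1) = 0" "gcoef_int a 0 = 1" "gcoef_int a 1 = - a"
    "gcoef_int a 2 = a * (a - 1) / 2" "gcoef_int a 3 = - (a * (a - 1) * (a - 2) / 6)"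
    using g0 g1 g2 g3 by (simp_all add: gcoef_int_def)
qed

lemma second_diff_bcoef_even:
  "second_diff (bcoef_even s \<gamma>) 0 = bcoef s \<gamma> 0 - bcoef s \<gamma> 1 + bcoef s \<gamma> 2 / 2"
  "second_diff (bcoef_even s \<gamma>) 1 = (bcoef s \<gamma> 1 - 2 * bcoef s \<gamma> 2 + bcoef s \<gamma> 3) / 2"
  by (simp_all add: second_diff_def bcoef_even_def bcoef_neg numeral_2_eq_2 numeral_3_eq_3)

lemma amat_margin_PQ_1_0_pos:
  assumes "1 < \<gamma>" "\<gamma> \<le> 2"
  shows "0 < amat_margin PQ_1_0 \<gamma>"
proof -
  define \<mu> where "\<mu> = 2 - \<gamma>"
  have \<mu>: "0 \<le> \<mu>" "\<mu> < 1" using assms unfolding \<mu>_def by auto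
  have "0 \<le> second_diff (bcoef_even PQ_1_0 \<gamma>) 1"
    unfolding second_diff_bcoef_even using bcoef_convex[of \<gamma> 1 PQ_1_0] assms by simp
  moreover have "second_diff (bcoef_even PQ_1_0 \<gamma>) 0 = (1 - \<mu>) * (8 - 6 * \<mu> + \<mu>\<^sup>2) / 8"
    unfolding second_diff_bcoef_even bcoef_def shift_comb_def \<mu>_def
    by (simp add: gcoef_int_0_to_3 field_simps power2_eq_square; simp add: algebra_simps)
  moreover have "0 < (1 - \<mu>) * (8 - 6 * \<mu> + \<mu>\<^sup>2)"
    using \<mu> zero_le_power2[of \<mu>] by (intro mult_pos_pos) linarith+
  ultimately show ?thesis unfolding amat_margin_def by simp
qed

lemma amat_margin_PQ_1_m1_pos:
  assumes "3/2 \<le> \<gamma>" "\<gamma> \<le> 2"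
  shows "0 < amat_margin PQ_1_m1 \<gamma>"
proof -
  define \<mu> where "\<mu> = 2 - \<gamma>"
  have \<mu>: "0 \<le> \<mu>" "\<mu> \<le> 1/2" using assms unfolding \<mu>_def by auto
  have p2: "0 \<le> \<mu>\<^sup>2" "\<mu>\<^sup>2 \<le> 1/4" using power_mono[OF \<mu>(2) \<mu>(1), of 2] by (simp_all add: power_divide)
  have p3: "0 \<le> \<mu>^3" "\<mu>^3 \<le> 1/8" using \<mu> power_mono[OF \<mu>(2) \<mu>(1), of 3] by (simp_all add: power_divide)
  have p4: "\<mu>^4 \<le> 1/16" using power_mono[OF \<mu>(2) \<mu>(1), of 4] by (simp add: power_divide)
  have "second_diff (bcoef_even PQ_1_m1 \<gamma>) 0 = 1 - 7/8 * \<mu> + 7/16 * \<mu>\<^sup>2 - 1/16 * \<mu>^3"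
    unfolding second_diff_bcoef_even bcoef_def shift_comb_def \<mu>_def
    by (simp add: gcoef_int_0_to_3 field_simps power2_eq_square power3_eq_cube; simp add: algebra_simps)
  then have d0: "0 < second_diff (bcoef_even PQ_1_m1 \<gamma>) 0" using \<mu> p2 p3 by linarith
  have "second_diff (bcoef_even PQ_1_m1 \<gamma>) 0 + 4 * second_diff (bcoef_even PQ_1_m1 \<gamma>) 1
      = 1 - 29/24 * \<mu> - 11/48 * \<mu>\<^sup>2 + 25/48 * \<mu>^3 - 1/12 * \<mu>^4"
    unfolding second_diff_bcoef_even bcoef_def shift_comb_def \<mu>_def
    by (simp add: gcoef_int_0_to_3 field_simps power2_eq_square power3_eq_cube power4_eq_xxxx;
        simp add: algebra_simps)
  then have d1: "0 < second_diff (bcoef_even PQ_1_m1 \<gamma>) 0 + 4 * second_diff (bcoef_even PQ_1_m1 \<gamma>) 1"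
    using \<mu> p2 p3 p4 by linarith
  show ?thesis using d0 d1 unfolding amat_margin_def by (simp add: min_def)
qed

lemma admissible_PQ_1_0: "1 < \<gamma> \<Longrightarrow> \<gamma> \<le> 2 \<Longrightarrow> admissible PQ_1_0 \<gamma>"
  unfolding admissible_def ccoef_def
  using amat_margin_PQ_1_0_pos[of \<gamma>] zero_le_power2[of "\<gamma> - 7/6"]
  by (auto simp: power2_eq_square algebra_simps)

text \<open>The lower bound \<open>(1 + \<surd>73) / 6\<close> is the positive root of \<open>3\<gamma>\<^sup>2 - \<gamma> - 6\<close>,
  i.e.\ exactly where \<open>ccoef PQ_1_m1 \<gamma>\<close> drops to \<open>1/4\<close>.\<close>
lemma admissible_PQ_1_m1:
  assumes \<gamma>: "(1 + sqrt 73) / 6 \<le> \<gamma>" "\<gamma> \<le> 2"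
  shows "admissible PQ_1_m1 \<gamma>"
proof -
  have "8 \<le> sqrt 73" by (rule real_le_rsqrt) simp
  then have "3/2 \<le> (1 + sqrt 73) / 6" by simp
  then have \<gamma>32: "3/2 \<le> \<gamma>" using \<gamma> by linarith
  have "sqrt 73 \<le> 6 * \<gamma> - 1" using \<gamma> by simp
  then have "(sqrt 73)\<^sup>2 \<le> (6 * \<gamma> - 1)\<^sup>2" by (intro power_mono) auto
  then have "73 \<le> (6 * \<gamma> - 1)\<^sup>2" by simp
  moreover have "\<gamma> * \<gamma> \<le> 2 * 2" using \<gamma> \<gamma>32 by (intro mult_mono) auto
  ultimately show ?thesis
    unfolding admissible_def ccoef_def using amat_margin_PQ_1_m1_pos[OF \<gamma>32 \<gamma>(2)] \<gamma> \<gamma>32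
    by (auto simp: power2_eq_square algebra_simps)
qed

theorem theorem3:
  shows "(\<forall>\<alpha> \<beta> :: real. 1 < \<alpha> \<and> \<alpha> \<le> 2 \<and> 1 < \<beta> \<and> \<beta> \<le> 2 \<longrightarrow>
            uncond_stable PQ_1_0 \<alpha> \<beta>)
       \<and> (\<forall>\<alpha> \<beta> :: real. (1 + sqrt 73) / 6 \<le> \<alpha> \<and> \<alpha> \<le> 2 \<and>
            (1 + sqrt 73) / 6 \<le> \<beta> \<and> \<beta> \<le> 2 \<longrightarrow> uncond_stable PQ_1_m1 \<alpha> \<beta>)"
  by (auto intro!: uncond_stable_of_admissible admissible_PQ_1_0 admissible_PQ_1_m1)

end
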